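(* Let $T$ be a decomposition tree of a distance-hereditary graph $G$. Then for every internal node $v$ of $T$ and every integer $0\le k\le|\hat{TS}(v)|$, $$\hat\gamma_k(v)=\begin{cases}\hat{min}(v)+\hat\alpha(v)-k & \text{if } 0\le k\le\hat\alpha(v),\\ \hat{min}(v)+k-\hat\beta(v) & \text{if } \hat\beta(v)\le k\le|\hat{TS}(v)|,\\ \hat{min}(v) & \text{if } \hat\alpha(v)<k<\hat\beta(v)\text{ and } k-\hat\alpha(v)\text{ is even},\\ \hat{min}(v)+1 & \text{otherwise.}\end{cases}$$
   Context: All graphs are finite, simple, undirected. For a graph $H$ and $S\subseteq V(H)$, $N_H[S]$ is $S$ together with all vertices adjacent to a vertex of $S$, and $H[S]$ is the induced subgraph. Graphs carry a "twin set": a single-vertex graph on $x$ has twin set $\{x\}$. For vertex-disjoint graphs $G_l,G_r$ with twin sets $TS(G_l),TS(G_r)$: the true twin operation $G_l\otimes G_r$ has vertex set $V(G_l)\cup V(G_r)$, edge set $E(G_l)\cup E(G_r)\cup\{uw: u\in TS(G_l), w\in TS(G_r)\}$ and twin set $TS(G_l)\cup TS(G_r)$; the false twin operation $G_l\odot G_r$ has vertex set $V(G_l)\cup V(G_r)$, edge set $E(G_l)\cup E(G_r)$, twin set $TS(G_l)\cup TS(G_r)$; the attachment operation $G_l\oplus G_r$ has the same vertex and edge sets as $G_l\otimes G_r$ and twin set $TS(G_l)$. A decomposition tree $T$ of $G$ is a rooted binary tree whose leaves are in bijection with $V(G)$, each internal node having a left and a right child and a label in $\{\otimes,\odot,\oplus\}$;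 for each node $v$ define $\hat G(v)$ and $\hat{TS}(v)$ recursively: for a leaf $x$, the single-vertex graph on $x$ with twin set $\{x\}$; for an internal node $v$ with label $\circ$ and children $v_l,v_r$, $\hat G(v)=\hat G(v_l)\circ\hat G(v_r)$ with the corresponding twin set; one requires $\hat G(\text{root})=G$. Then $\hat G(v)$ is the subgraph of $G$ induced by the set $\hat V(v)$ of leaves below $v$. For a node $v$ and $0\le k\le|\hat{TS}(v)|$, call $S\subseteq\hat V(v)$ $k$-feasible if $\hat V(v)\setminus\hat{TS}(v)\subseteq N_{\hat G(v)}[S]$ and there is $X\subseteq S\cap\hat{TS}(v)$ with $|X|=k$ such that $\hat G(v)[S\setminus X]$ has a perfect matching. $\hat\gamma_k(v)$ is the minimum size of a $k$-feasible set. $\hat{min}(v)=\min\{\hat\gamma_k(v):0\le k\le|\hat{TS}(v)|\}$, and $\hat\alpha(v)$, $\hat\beta(v)$ are the smallest and the largest $k$ with $\hat\gamma_k(v)=\hat{min}(v)$. *)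

theory Defs
  imports Main "HOL-Library.Extended_Nat"
begin

definition simple_graph :: "'a set \<Rightarrow> 'a set set \<Rightarrow> bool" where
  "simple_graph V E \<longleftrightarrow> finite V \<and> (\<forall>e\<in>E. e \<subseteq> V \<and> card e = 2)"

definition walk_in :: "'a set \<Rightarrow> 'a set set \<Rightarrow> 'a list \<Rightarrow> bool" where
  "walk_in W E xs \<longleftrightarrow> xs \<noteq> [] \<and> set xs \<subseteq> W \<and>
     (\<forall>i. i + 1 < length xs \<longrightarrow> {xs ! i, xs ! (i + 1)} \<in> E)"

definition connected_on :: "'a set \<Rightarrow> 'a set set \<Rightarrow> bool" where
  "connected_on W E \<longleftrightarrow>
     (\<forall>u\<in>W. \<forall>v\<in>W. \<exists>xs. walk_in W E xs \<and> hd xs = u \<and> last xs = v)"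

definition dist_in :: "'a set \<Rightarrow> 'a set set \<Rightarrow> 'a \<Rightarrow> 'a \<Rightarrow> nat" where
  "dist_in W E u v =
     (LEAST n. \<exists>xs. walk_in W E xs \<and> hd xs = u \<and> last xs = v \<and> length xs = n + 1)"

definition distance_hereditary :: "'a set \<Rightarrow> 'a set set \<Rightarrow> bool" where
  "distance_hereditary V E \<longleftrightarrow> simple_graph V E \<and>
     (\<forall>W\<subseteq>V. connected_on W E \<longrightarrow>
        (\<forall>u\<in>W. \<forall>v\<in>W. dist_in W E u v = dist_in V E u v))"

datatype op_label = TrueTwin | FalseTwin | Attach

datatype 'a dtree = Leaf 'a | Node op_label "'a dtree" "'a dtree"

fun leaves :: "'a dtree \<Rightarrow> 'a set" where
  "leaves (Leaf x) = {x}"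
| "leaves (Node c l r) = leaves l \<union> leaves r"

fun tts :: "'a dtree \<Rightarrow> 'a set" where
  "tts (Leaf x) = {x}"
| "tts (Node TrueTwin l r) = tts l \<union> tts r"
| "tts (Node FalseTwin l r) = tts l \<union> tts r"
| "tts (Node Attach l r) = tts l"

fun tedges :: "'a dtree \<Rightarrow> 'a set set" where
  "tedges (Leaf x) = {}"
| "tedges (Node TrueTwin l r) =
     tedges l \<union> tedges r \<union> {{u, w} | u w. u \<in> tts l \<and> w \<in> tts r}"
| "tedges (Node FalseTwin l r) = tedges l \<union> tedges r"
| "tedges (Node Attach l r) =
     tedges l \<union> tedges r \<union> {{u, w} | u w. u \<in> tts l \<and> w \<in> tts r}"

fun distinct_leaves :: "'a dtree \<Rightarrow> bool" where
  "distinct_leaves (Leaf x) = True"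
| "distinct_leaves (Node c l r) \<longleftrightarrow>
     distinct_leaves l \<and> distinct_leaves r \<and> leaves l \<inter> leaves r = {}"

fun subtrees :: "'a dtree \<Rightarrow> 'a dtree set" where
  "subtrees (Leaf x) = {Leaf x}"
| "subtrees (Node c l r) = insert (Node c l r) (subtrees l \<union> subtrees r)"

fun is_internal :: "'a dtree \<Rightarrow> bool" where
  "is_internal (Leaf x) = False"
| "is_internal (Node c l r) = True"

definition decomposition_tree :: "'a dtree \<Rightarrow> 'a set \<Rightarrow> 'a set set \<Rightarrow> bool" where
  "decomposition_tree T V E \<longleftrightarrow> distinct_leaves T \<and> leaves T = V \<and> tedges T = E"

definition closed_nbhd :: "'a set set \<Rightarrow> 'a set \<Rightarrow> 'a set" where
  "closed_nbhd E S = S \<union> {u. \<exists>w\<in>S. {u, w} \<in> E}"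

definition has_perfect_matching :: "'a set set \<Rightarrow> 'a set \<Rightarrow> bool" where
  "has_perfect_matching E W \<longleftrightarrow>
     (\<exists>M. M \<subseteq> E \<and> (\<forall>e\<in>M. e \<subseteq> W) \<and>
          (\<forall>e\<in>M. \<forall>e'\<in>M. e \<noteq> e' \<longrightarrow> e \<inter> e' = {}) \<and> \<Union>M = W)"

definition k_feasible :: "'a dtree \<Rightarrow> nat \<Rightarrow> 'a set \<Rightarrow> bool" where
  "k_feasible v k S \<longleftrightarrow> S \<subseteq> leaves v \<and>
     leaves v - tts v \<subseteq> closed_nbhd (tedges v) S \<and>
     (\<exists>X. X \<subseteq> S \<inter> tts v \<and> card X = k \<and> has_perfect_matching (tedges v) (S - X))"

text \<open>minimum size of a k-feasible set (infinity if none exists)\<close>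
definition gamma_hat :: "'a dtree \<Rightarrow> nat \<Rightarrow> enat" where
  "gamma_hat v k = (INF S\<in>{S. k_feasible v k S}. enat (card S))"

definition min_hat :: "'a dtree \<Rightarrow> enat" where
  "min_hat v = Min (gamma_hat v ` {0..card (tts v)})"

definition alpha_hat :: "'a dtree \<Rightarrow> nat" where
  "alpha_hat v = (LEAST k. k \<le> card (tts v) \<and> gamma_hat v k = min_hat v)"

definition beta_hat :: "'a dtree \<Rightarrow> nat" where
  "beta_hat v = (GREATEST k. k \<le> card (tts v) \<and> gamma_hat v k = min_hat v)"

end

(*
  Write the claim as gamma_k = min + excess alpha beta k, where, for beta - alpha even,
  excess alpha beta k is the distance from k to the progression alpha, alpha + 2, ..., beta.
  By induction on the decomposition tree, the gamma-values of every node have this shape.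

  A k-feasible set S of a node, together with its witness X (|X| = k), restricts to
  feasible sets of the two children, and feasible sets of the children combine; so gamma
  at a node is a min-plus convolution of the children's profiles, indexed by the sizes of
  the witnesses. At a false twin node these sizes add. At a true twin node, j twins left
  unmatched on each side can in addition be matched across the join, giving p1 + p2 - 2j.
  At an attachment node only the left twins remain in the twin set and unmatched right
  twins must be matched to left twins, giving p1 - p2. In each case the optimal sizes
  again form a progression of step 2, with ends computed by twin_alpha and attach_alpha.
  The one irregular case, an attachment node with alpha1 = alpha2 = 0 and k = 0, is
  settled by parity: |S| + k is even because S - X has a perfect matching.
*)

theory Submission
  imports Defs
begin

section \<open>Distance to a progression of step two\<close>

definition nat_dist :: "nat \<Rightarrow> nat \<Rightarrow> nat" where
  "nat_dist x y = (x - y) + (y - x)"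

definition even_gap :: "nat \<Rightarrow> nat \<Rightarrow> bool" where
  "even_gap a b \<longleftrightarrow> a \<le> b \<and> even (b - a)"

definition parity_range :: "nat \<Rightarrow> nat \<Rightarrow> nat set" where
  "parity_range a b = {p. a \<le> p \<and> p \<le> b \<and> even (p - a)}"

text \<open>For \<open>even_gap a b\<close>, \<open>excess a b k\<close> is the distance from \<open>k\<close> to \<open>parity_range a b\<close>
  (lemmas \<open>excess_le_nat_dist\<close> and \<open>excess_attained\<close>).\<close>
definition excess :: "nat \<Rightarrow> nat \<Rightarrow> nat \<Rightarrow> nat" where
  "excess a b k =
     (if k \<le> a then a - k else if b \<le> k then k - b else if even (k - a) then 0 else 1)"

lemma mod_two_le: "(odd x \<Longrightarrow> odd y) \<Longrightarrow> x mod 2 \<le> (y::nat)"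
  using odd_pos[of y] by (cases "even x") (auto simp: odd_iff_mod_2_eq_one)

lemma excess_le_nat_dist:
  assumes "p \<in> parity_range a b"
  shows "excess a b k \<le> nat_dist k p"
proof (cases "k \<le> a \<or> b \<le> k \<or> k = p")
  case True
  then show ?thesis using assms unfolding parity_range_def excess_def nat_dist_def by auto
next
  case False
  then show ?thesis unfolding excess_def nat_dist_def by auto
qed

lemma excess_attained:
  assumes "even_gap a b"
  obtains p where "p \<in> parity_range a b" "excess a b k = nat_dist k p"
proof -
  consider "k \<le> a" | "b \<le> k" | "a < k" "k < b" "even (k - a)" | "a < k" "k < b" "odd (k - a)"
    by linarith
  then show thesis
  proof cases
    case 1 then show ?thesis using assms that[of a]
      unfolding even_gap_def parity_range_def excess_def nat_dist_def by auto
  next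
    case 2 then show ?thesis using assms that[of b]
      unfolding even_gap_def parity_range_def excess_def nat_dist_def by auto
  next
    case 3 then show ?thesis using that[of k]
      unfolding parity_range_def excess_def nat_dist_def by auto
  next
    case 4
    then have "even (k - 1 - a)" "a \<le> k - 1" by presburger+
    then show ?thesis using 4 that[of "k - 1"]
      unfolding parity_range_def excess_def nat_dist_def by auto
  qed
qed

lemma excess_attained_above:
  assumes "even_gap a b" "k < b"
  obtains p where "p \<in> parity_range a b" "k \<le> p" "excess a b k = nat_dist k p"
proof -
  consider "k \<le> a" | "a < k" "even (k - a)" | "a < k" "odd (k - a)" by linarith
  then show thesis
  proof cases
    case 1 then show ?thesis using assms that[of a]
      unfolding even_gap_def parity_range_def excess_def nat_dist_def by auto
  next
    case 2 then show ?thesis using assms that[of k]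
      unfolding parity_range_def excess_def nat_dist_def by auto
  next
    case 3
    then have "even (Suc k - a)" by (simp add: Suc_diff_le)
    then show ?thesis using 3 assms that[of "Suc k"]
      unfolding parity_range_def excess_def nat_dist_def by auto
  qed
qed

lemma excess_above: "a \<le> b \<Longrightarrow> b \<le> k \<Longrightarrow> excess a b k = k - b"
  unfolding excess_def by auto

lemma excess_zero_one: "even b \<Longrightarrow> excess 0 b 1 = 1"
  unfolding excess_def by (cases "b = 0") (auto elim: evenE)

lemma parity_range_add:
  "p1 \<in> parity_range a1 b1 \<Longrightarrow> p2 \<in> parity_range a2 b2 \<Longrightarrow>
   p1 + p2 \<in> parity_range (a1 + a2) (b1 + b2)"
  unfolding parity_range_def by auto

lemma parity_range_add_split:
  assumes "p \<in> parity_range (a1 + a2) (b1 + b2)" "even_gap a1 b1" "even_gap a2 b2"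
  obtains p1 p2 where "p1 \<in> parity_range a1 b1" "p2 \<in> parity_range a2 b2" "p = p1 + p2"
proof (cases "p - a2 \<le> b1")
  case True
  then show thesis using assms that[of "p - a2" a2]
    unfolding even_gap_def parity_range_def by auto
next
  case False
  have p: "a1 + a2 \<le> p" "p \<le> b1 + b2" "even (p - (a1 + a2))" and ab: "a1 \<le> b1" "even (b1 - a1)"
    using assms(1,2) unfolding even_gap_def parity_range_def by auto
  have "p - b1 - a2 = (p - (a1 + a2)) - (b1 - a1)" using False ab(1) by simp
  moreover have "even ((p - (a1 + a2)) - (b1 - a1))" using p(3) ab(2) by (rule dvd_diff_nat)
  ultimately have "a2 \<le> p - b1 \<and> p - b1 \<le> b2 \<and> even (p - b1 - a2)"
    using False p(2) by auto
  then show thesis using assms that[of b1 "p - b1"] False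
    unfolding even_gap_def parity_range_def by auto
qed

lemma excess_add_le:
  assumes "even_gap a1 b1" "even_gap a2 b2"
  shows "excess (a1 + a2) (b1 + b2) (k1 + k2) \<le> excess a1 b1 k1 + excess a2 b2 k2"
proof -
  obtain p1 where p1: "p1 \<in> parity_range a1 b1" "excess a1 b1 k1 = nat_dist k1 p1"
    using excess_attained[OF assms(1)] .
  obtain p2 where p2: "p2 \<in> parity_range a2 b2" "excess a2 b2 k2 = nat_dist k2 p2"
    using excess_attained[OF assms(2)] .
  have "excess (a1 + a2) (b1 + b2) (k1 + k2) \<le> nat_dist (k1 + k2) (p1 + p2)"
    using excess_le_nat_dist parity_range_add p1(1) p2(1) by blast
  also have "\<dots> \<le> nat_dist k1 p1 + nat_dist k2 p2" unfolding nat_dist_def by arith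
  finally show ?thesis using p1 p2 by simp
qed

lemma excess_add_split:
  assumes "even_gap a1 b1" "even_gap a2 b2" "b1 \<le> n1" "b2 \<le> n2" "k \<le> n1 + n2"
  obtains k1 k2 where "k1 \<le> n1" "k2 \<le> n2" "k = k1 + k2"
    "excess a1 b1 k1 + excess a2 b2 k2 = excess (a1 + a2) (b1 + b2) k"
proof -
  have "even_gap (a1 + a2) (b1 + b2)" using assms(1,2) unfolding even_gap_def by auto
  then obtain p where p: "p \<in> parity_range (a1 + a2) (b1 + b2)"
    "excess (a1 + a2) (b1 + b2) k = nat_dist k p" by (rule excess_attained)
  obtain p1 p2 where pp: "p1 \<in> parity_range a1 b1" "p2 \<in> parity_range a2 b2" "p = p1 + p2"
    using parity_range_add_split[OF p(1) assms(1,2)] .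
  define k1 where "k1 = (if k \<le> p then min k p1 else p1 + min (k - p) (n1 - p1))"
  define k2 where "k2 = k - k1"
  have "p1 \<le> n1" "p2 \<le> n2" using pp assms(3,4) unfolding parity_range_def by auto
  then have k: "k1 \<le> n1" "k2 \<le> n2" "k = k1 + k2" "nat_dist k1 p1 + nat_dist k2 p2 = nat_dist k p"
    using assms(5) pp(3) unfolding k1_def k2_def nat_dist_def by auto
  have "excess a1 b1 k1 + excess a2 b2 k2 \<le> excess (a1 + a2) (b1 + b2) k"
    using excess_le_nat_dist[OF pp(1), of k1] excess_le_nat_dist[OF pp(2), of k2] k(4) p(2)
    by linarith
  moreover have "excess (a1 + a2) (b1 + b2) k \<le> excess a1 b1 k1 + excess a2 b2 k2"
    using excess_add_le[OF assms(1,2)] k(3) by simp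
  ultimately show thesis using that k(1-3) by simp
qed

text \<open>\<open>parity_range (twin_alpha a1 b1 a2 b2) (b1 + b2)\<close> consists of the numbers
  \<open>p1 + p2 - 2 * j\<close> with \<open>p\<^sub>i \<in> parity_range a\<^sub>i b\<^sub>i\<close> and \<open>j \<le> p1, p2\<close>.\<close>
definition twin_alpha :: "nat \<Rightarrow> nat \<Rightarrow> nat \<Rightarrow> nat \<Rightarrow> nat" where
  "twin_alpha a1 b1 a2 b2 = max (max (a1 - b2) (a2 - b1)) ((a1 + a2) mod 2)"

lemma even_max_mod_two:
  assumes "x = 0 \<or> (even x \<longleftrightarrow> even s)" "y = 0 \<or> (even y \<longleftrightarrow> even s)"
  shows "even (max (max x y) (s mod 2)) \<longleftrightarrow> even (s::nat)"
  using assms by (cases "even s") (auto simp: max_def odd_iff_mod_2_eq_one)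

lemma twin_alpha_parity:
  assumes "even_gap a1 b1" "even_gap a2 b2"
  shows "even (twin_alpha a1 b1 a2 b2) \<longleftrightarrow> even (a1 + a2)"
  unfolding twin_alpha_def
proof (rule even_max_mod_two)
  show "a1 - b2 = 0 \<or> (even (a1 - b2) \<longleftrightarrow> even (a1 + a2))"
    using assms by (cases "b2 \<le> a1") (auto simp: even_gap_def)
  show "a2 - b1 = 0 \<or> (even (a2 - b1) \<longleftrightarrow> even (a1 + a2))"
    using assms by (cases "b1 \<le> a2") (auto simp: even_gap_def)
qed

lemma even_gap_twin_alpha:
  assumes "even_gap a1 b1" "even_gap a2 b2"
  shows "even_gap (twin_alpha a1 b1 a2 b2) (b1 + b2)"
proof -
  have "(a1 + a2) mod 2 \<le> b1 + b2"
    by (rule mod_two_le) (use assms in \<open>auto simp: even_gap_def\<close>)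
  then have "twin_alpha a1 b1 a2 b2 \<le> b1 + b2"
    using assms unfolding twin_alpha_def even_gap_def by auto
  then show ?thesis using twin_alpha_parity[OF assms] assms unfolding even_gap_def by auto
qed

lemma twin_pairing_mem_parity_range:
  assumes "even_gap a1 b1" "even_gap a2 b2"
    and "p1 \<in> parity_range a1 b1" "p2 \<in> parity_range a2 b2" "j \<le> p1" "j \<le> p2"
  shows "p1 + p2 - 2 * j \<in> parity_range (twin_alpha a1 b1 a2 b2) (b1 + b2)"
proof -
  let ?p = "p1 + p2 - 2 * j"
  have par: "even ?p \<longleftrightarrow> even (a1 + a2)" using assms(3-6) unfolding parity_range_def by auto
  then have "(a1 + a2) mod 2 \<le> ?p" by (intro mod_two_le) simp
  moreover have "a1 - b2 \<le> ?p" "a2 - b1 \<le> ?p" "?p \<le> b1 + b2"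
    using assms(3-6) unfolding parity_range_def by auto
  ultimately show ?thesis using par twin_alpha_parity[OF assms(1,2)]
    unfolding parity_range_def twin_alpha_def by auto
qed

lemma twin_parity_range_decompose:
  assumes "even_gap a1 b1" "even_gap a2 b2" "p \<in> parity_range (twin_alpha a1 b1 a2 b2) (b1 + b2)"
  obtains p1 p2 j where "p1 \<in> parity_range a1 b1" "p2 \<in> parity_range a2 b2"
    "j \<le> p1" "j \<le> p2" "p1 + p2 = p + 2 * j"
proof -
  have b: "b1 \<in> parity_range a1 b1" "b2 \<in> parity_range a2 b2"
    using assms(1,2) unfolding even_gap_def parity_range_def by auto
  have ab: "a1 \<le> b1" "even b1 \<longleftrightarrow> even a1" "a2 \<le> b2" "even b2 \<longleftrightarrow> even a2"
    using assms(1,2) unfolding even_gap_def by auto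
  have t: "twin_alpha a1 b1 a2 b2 \<le> p" "p \<le> b1 + b2" "even (p - twin_alpha a1 b1 a2 b2)"
    using assms(3) unfolding parity_range_def by auto
  then have par: "even p \<longleftrightarrow> even (a1 + a2)" using twin_alpha_parity[OF assms(1,2)] by simp
  have lo: "a1 - b2 \<le> p" "a2 - b1 \<le> p" using t(1) unfolding twin_alpha_def by auto
  consider "b1 - b2 \<le> p" "b2 - b1 \<le> p" | "p < b1 - b2" | "p < b2 - b1" by linarith
  then show thesis
  proof cases
    case 1
    have "even (b1 + b2 - p)" using par ab t(2) by simp
    then obtain q where "b1 + b2 - p = 2 * q" by blast
    then show thesis using that[OF b, of q] 1 t(2) by linarith
  next
    case 2
    have "p + b2 \<in> parity_range a1 b1"
      using 2 lo par ab unfolding parity_range_def by auto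
    then show thesis using that[OF _ b(2), of "p + b2" b2] by simp
  next
    case 3
    have "p + b1 \<in> parity_range a2 b2"
      using 3 lo par ab unfolding parity_range_def by auto
    then show thesis using that[OF b(1), of "p + b1" b1] by simp
  qed
qed

lemma excess_twin_le:
  assumes "even_gap a1 b1" "even_gap a2 b2"
  shows "excess (twin_alpha a1 b1 a2 b2) (b1 + b2) (x1 + x2) \<le>
    excess a1 b1 (x1 + j) + excess a2 b2 (x2 + j)"
proof -
  obtain p1 where p1: "p1 \<in> parity_range a1 b1" "excess a1 b1 (x1 + j) = nat_dist (x1 + j) p1"
    using excess_attained[OF assms(1)] .
  obtain p2 where p2: "p2 \<in> parity_range a2 b2" "excess a2 b2 (x2 + j) = nat_dist (x2 + j) p2"
    using excess_attained[OF assms(2)] .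
  define i where "i = min j (min p1 p2)"
  have "excess (twin_alpha a1 b1 a2 b2) (b1 + b2) (x1 + x2) \<le> nat_dist (x1 + x2) (p1 + p2 - 2 * i)"
    using excess_le_nat_dist twin_pairing_mem_parity_range[OF assms p1(1) p2(1)] i_def by simp
  also have "\<dots> \<le> nat_dist (x1 + j) p1 + nat_dist (x2 + j) p2"
    unfolding nat_dist_def i_def min_def by auto
  finally show ?thesis using p1 p2 by simp
qed

lemma excess_twin_split_le:
  assumes "even_gap a1 b1" "even_gap a2 b2" "b1 \<le> n1" "b2 \<le> n2" "k \<le> n1 + n2"
  shows "\<exists>x1 x2 j. x1 + j \<le> n1 \<and> x2 + j \<le> n2 \<and> k = x1 + x2 \<and>
    excess a1 b1 (x1 + j) + excess a2 b2 (x2 + j) \<le> excess (twin_alpha a1 b1 a2 b2) (b1 + b2) k"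
proof (cases "b1 + b2 \<le> k")
  case True
  obtain k1 k2 where k: "k1 \<le> n1" "k2 \<le> n2" "k = k1 + k2"
    "excess a1 b1 k1 + excess a2 b2 k2 = excess (a1 + a2) (b1 + b2) k"
    using excess_add_split[OF assms] .
  have "a1 + a2 \<le> b1 + b2" "twin_alpha a1 b1 a2 b2 \<le> b1 + b2"
    using even_gap_twin_alpha[OF assms(1,2)] assms(1,2) unfolding even_gap_def by auto
  then have "excess (a1 + a2) (b1 + b2) k = excess (twin_alpha a1 b1 a2 b2) (b1 + b2) k"
    using True by (simp add: excess_above)
  then show ?thesis using k by (intro exI[of _ k1] exI[of _ k2] exI[of _ 0]) auto
next
  case False
  then have "k < b1 + b2" by simp
  then obtain p where p: "p \<in> parity_range (twin_alpha a1 b1 a2 b2) (b1 + b2)" "k \<le> p"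
    "excess (twin_alpha a1 b1 a2 b2) (b1 + b2) k = nat_dist k p"
    using excess_attained_above[OF even_gap_twin_alpha[OF assms(1,2)]] by blast
  obtain p1 p2 j where d: "p1 \<in> parity_range a1 b1" "p2 \<in> parity_range a2 b2"
    "j \<le> p1" "j \<le> p2" "p1 + p2 = p + 2 * j"
    using twin_parity_range_decompose[OF assms(1,2) p(1)] .
  define s1 where "s1 = min (p - k) (p1 - j)"
  define s2 where "s2 = p - k - s1"
  define x1 where "x1 = p1 - j - s1"
  define x2 where "x2 = p2 - j - s2"
  have "p1 \<le> n1" "p2 \<le> n2" using d(1,2) assms(3,4) unfolding parity_range_def by auto
  then have x: "x1 + j \<le> n1" "x2 + j \<le> n2" "k = x1 + x2"
    "nat_dist (x1 + j) p1 + nat_dist (x2 + j) p2 = nat_dist k p"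
    using d(3-5) p(2) unfolding s1_def s2_def x1_def x2_def nat_dist_def by auto
  have "excess a1 b1 (x1 + j) + excess a2 b2 (x2 + j) \<le> excess (twin_alpha a1 b1 a2 b2) (b1 + b2) k"
    using x(4) excess_le_nat_dist[OF d(1), of "x1 + j"] excess_le_nat_dist[OF d(2), of "x2 + j"]
      p(3) by linarith
  then show ?thesis using x(1-3) by blast
qed

lemma excess_twin_split:
  assumes "even_gap a1 b1" "even_gap a2 b2" "b1 \<le> n1" "b2 \<le> n2" "k \<le> n1 + n2"
  obtains x1 x2 j where "x1 + j \<le> n1" "x2 + j \<le> n2" "k = x1 + x2"
    "excess a1 b1 (x1 + j) + excess a2 b2 (x2 + j) = excess (twin_alpha a1 b1 a2 b2) (b1 + b2) k"
proof -
  let ?a = "twin_alpha a1 b1 a2 b2"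
  obtain x1 x2 j where x: "x1 + j \<le> n1" "x2 + j \<le> n2" "k = x1 + x2"
    "excess a1 b1 (x1 + j) + excess a2 b2 (x2 + j) \<le> excess ?a (b1 + b2) k"
    using excess_twin_split_le[OF assms] by blast
  moreover have "excess ?a (b1 + b2) k \<le> excess a1 b1 (x1 + j) + excess a2 b2 (x2 + j)"
    using excess_twin_le[OF assms(1,2)] x(3) by blast
  ultimately show thesis using that by simp
qed

text \<open>If \<open>a2 \<le> b1\<close>, \<open>parity_range (attach_alpha a1 b1 a2 b2) (b1 - a2)\<close> consists of the
  differences \<open>p1 - p2 \<ge> 0\<close> with \<open>p\<^sub>i \<in> parity_range a\<^sub>i b\<^sub>i\<close>; if \<open>a2 > b1\<close>, the right child
  costs \<open>a2 - b1\<close> extra vertices and only \<open>k = 0\<close> is optimal.\<close>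
definition attach_alpha :: "nat \<Rightarrow> nat \<Rightarrow> nat \<Rightarrow> nat \<Rightarrow> nat" where
  "attach_alpha a1 b1 a2 b2 = (if a2 \<le> b1 then twin_alpha a1 b1 a2 b2 else 0)"

lemma even_gap_attach_alpha:
  assumes "even_gap a1 b1" "even_gap a2 b2"
  shows "even_gap (attach_alpha a1 b1 a2 b2) (b1 - a2)"
proof (cases "a2 \<le> b1")
  case True
  have "(a1 + a2) mod 2 \<le> b1 - a2"
    by (rule mod_two_le) (use assms True in \<open>auto simp: even_gap_def\<close>)
  then have "twin_alpha a1 b1 a2 b2 \<le> b1 - a2"
    using assms True unfolding twin_alpha_def even_gap_def by auto
  then show ?thesis using True twin_alpha_parity[OF assms] assms
    unfolding attach_alpha_def even_gap_def by auto
next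
  case False
  then show ?thesis unfolding attach_alpha_def even_gap_def by simp
qed

lemma attach_diff_mem_parity_range:
  assumes "even_gap a1 b1" "even_gap a2 b2" "a2 \<le> b1"
    and "p1 \<in> parity_range a1 b1" "p2 \<in> parity_range a2 b2" "p2 \<le> p1"
  shows "p1 - p2 \<in> parity_range (twin_alpha a1 b1 a2 b2) (b1 - a2)"
proof -
  have par: "even (p1 - p2) \<longleftrightarrow> even (a1 + a2)" using assms(4-6) unfolding parity_range_def by auto
  then have "(a1 + a2) mod 2 \<le> p1 - p2" by (intro mod_two_le) simp
  moreover have "a1 - b2 \<le> p1 - p2" "a2 - b1 \<le> p1 - p2" "p1 - p2 \<le> b1 - a2"
    using assms(3-6) unfolding parity_range_def by auto
  ultimately show ?thesis using par twin_alpha_parity[OF assms(1,2)]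
    unfolding parity_range_def twin_alpha_def by auto
qed

lemma excess_attach_le:
  assumes "even_gap a1 b1" "even_gap a2 b2"
  shows "(a2 - b1) + excess (attach_alpha a1 b1 a2 b2) (b1 - a2) k \<le>
    excess a1 b1 (k + j) + excess a2 b2 j"
proof -
  obtain p1 where p1: "p1 \<in> parity_range a1 b1" "excess a1 b1 (k + j) = nat_dist (k + j) p1"
    using excess_attained[OF assms(1)] .
  obtain p2 where p2: "p2 \<in> parity_range a2 b2" "excess a2 b2 j = nat_dist j p2"
    using excess_attained[OF assms(2)] .
  have "(a2 - b1) + excess (attach_alpha a1 b1 a2 b2) (b1 - a2) k \<le> nat_dist (k + j) p1 + nat_dist j p2"
  proof (cases "a2 \<le> b1")
    case False
    then have "excess (attach_alpha a1 b1 a2 b2) (b1 - a2) k = k"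
      by (simp add: attach_alpha_def excess_def)
    then show ?thesis using False p1(1) p2(1) unfolding parity_range_def nat_dist_def by auto
  next
    case True
    let ?t = "twin_alpha a1 b1 a2 b2"
    have "excess ?t (b1 - a2) k \<le> nat_dist (k + j) p1 + nat_dist j p2"
    proof (cases "p2 \<le> p1")
      case True
      have "excess ?t (b1 - a2) k \<le> nat_dist k (p1 - p2)"
        using excess_le_nat_dist attach_diff_mem_parity_range[OF assms \<open>a2 \<le> b1\<close> p1(1) p2(1) True] .
      also have "\<dots> \<le> nat_dist (k + j) p1 + nat_dist j p2" using True unfolding nat_dist_def by auto
      finally show ?thesis .
    next
      case False
      have "?t \<in> parity_range ?t (b1 - a2)"
        using even_gap_attach_alpha[OF assms] \<open>a2 \<le> b1\<close>
        unfolding attach_alpha_def even_gap_def parity_range_def by auto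
      then have "excess ?t (b1 - a2) k \<le> nat_dist k ?t" by (rule excess_le_nat_dist)
      moreover have "?t \<le> 1"
        using False p1(1) p2(1) \<open>a2 \<le> b1\<close> unfolding parity_range_def twin_alpha_def by auto
      moreover have "k + 1 \<le> nat_dist (k + j) p1 + nat_dist j p2"
        using False unfolding nat_dist_def by auto
      ultimately show ?thesis unfolding nat_dist_def by linarith
    qed
    then show ?thesis using True by (simp add: attach_alpha_def)
  qed
  then show ?thesis using p1(2) p2(2) by simp
qed

lemma attach_parity_range_decompose:
  assumes "even_gap a1 b1" "even_gap a2 b2" "a2 \<le> b1"
    and "p \<in> parity_range (twin_alpha a1 b1 a2 b2) (b1 - a2)"
  obtains p1 p2 where "p1 \<in> parity_range a1 b1" "p2 \<in> parity_range a2 b2" "p1 = p + p2"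
proof -
  have ab: "a1 \<le> b1" "even b1 \<longleftrightarrow> even a1" "a2 \<le> b2" "even b2 \<longleftrightarrow> even a2"
    using assms(1,2) unfolding even_gap_def by auto
  have t: "twin_alpha a1 b1 a2 b2 \<le> p" "p \<le> b1 - a2" "even (p - twin_alpha a1 b1 a2 b2)"
    using assms(4) unfolding parity_range_def by auto
  then have par: "even p \<longleftrightarrow> even (a1 + a2)" using twin_alpha_parity[OF assms(1,2)] by simp
  have lo: "a1 - b2 \<le> p" using t(1) unfolding twin_alpha_def by auto
  show thesis
  proof (cases "a1 \<le> p + a2")
    case True
    have "p + a2 \<in> parity_range a1 b1" "a2 \<in> parity_range a2 b2"
      using True t(2) par ab assms(3) unfolding parity_range_def by auto
    then show thesis using that by simp
  next
    case False
    have "a1 \<in> parity_range a1 b1" "a1 - p \<in> parity_range a2 b2"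
      using False lo par ab unfolding parity_range_def by auto
    then show thesis using that[of a1 "a1 - p"] False by simp
  qed
qed

lemma excess_attach_split_le:
  assumes "even_gap a1 b1" "even_gap a2 b2" "b1 \<le> n1" "b2 \<le> n2" "k \<le> n1"
  shows "\<exists>j. j \<le> n2 \<and> k + j \<le> n1 \<and>
    excess a1 b1 (k + j) + excess a2 b2 j \<le> (a2 - b1) + excess (attach_alpha a1 b1 a2 b2) (b1 - a2) k"
proof -
  let ?rhs = "(a2 - b1) + excess (attach_alpha a1 b1 a2 b2) (b1 - a2) k"
  show ?thesis
  proof (cases "a2 \<le> b1")
    case False
    define j where "j = b1 - k"
    have "b1 \<in> parity_range a1 b1" "a2 \<in> parity_range a2 b2"
      using assms(1,2) unfolding even_gap_def parity_range_def by auto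
    then have "excess a1 b1 (k + j) + excess a2 b2 j \<le> nat_dist (k + j) b1 + nat_dist j a2"
      by (intro add_mono excess_le_nat_dist)
    also have "\<dots> = ?rhs"
      using False by (cases "k \<le> b1") (simp_all add: j_def attach_alpha_def excess_def nat_dist_def)
    finally have "excess a1 b1 (k + j) + excess a2 b2 j \<le> ?rhs" .
    moreover have "j \<le> n2" "k + j \<le> n1"
      using False assms(2-5) unfolding j_def even_gap_def by auto
    ultimately show ?thesis by blast
  next
    case True
    then obtain p where p: "p \<in> parity_range (twin_alpha a1 b1 a2 b2) (b1 - a2)"
      "excess (twin_alpha a1 b1 a2 b2) (b1 - a2) k = nat_dist k p"
      using excess_attained[OF even_gap_attach_alpha[OF assms(1,2)]] by (auto simp: attach_alpha_def)
    obtain p1 p2 where d: "p1 \<in> parity_range a1 b1" "p2 \<in> parity_range a2 b2" "p1 = p + p2"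
      using attach_parity_range_decompose[OF assms(1,2) True p(1)] .
    define j where "j = min p2 (n1 - k)"
    have "p1 \<le> n1" "p2 \<le> n2" using d(1,2) assms(3,4) unfolding parity_range_def by auto
    then have j: "j \<le> n2" "k + j \<le> n1" "nat_dist (k + j) p1 + nat_dist j p2 = nat_dist k p"
      using d(3) assms(5) unfolding j_def nat_dist_def min_def by auto
    have "excess a1 b1 (k + j) + excess a2 b2 j \<le> ?rhs"
      using j(3) excess_le_nat_dist[OF d(1), of "k + j"] excess_le_nat_dist[OF d(2), of j] p(2) True
      by (simp add: attach_alpha_def)
    then show ?thesis using j(1,2) by blast
  qed
qed

lemma excess_attach_split:
  assumes "even_gap a1 b1" "even_gap a2 b2" "b1 \<le> n1" "b2 \<le> n2" "k \<le> n1"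
  obtains j where "j \<le> n2" "k + j \<le> n1"
    "excess a1 b1 (k + j) + excess a2 b2 j = (a2 - b1) + excess (attach_alpha a1 b1 a2 b2) (b1 - a2) k"
proof -
  obtain j where "j \<le> n2" "k + j \<le> n1"
    "excess a1 b1 (k + j) + excess a2 b2 j \<le> (a2 - b1) + excess (attach_alpha a1 b1 a2 b2) (b1 - a2) k"
    using excess_attach_split_le[OF assms] by blast
  moreover have "(a2 - b1) + excess (attach_alpha a1 b1 a2 b2) (b1 - a2) k \<le> excess a1 b1 (k + j) + excess a2 b2 j"
    using excess_attach_le[OF assms(1,2)] .
  ultimately show thesis using that by simp
qed

lemma excess_attach_split_zero:
  assumes "even_gap a1 b1" "even_gap a2 b2" "b1 \<le> n1" "b2 \<le> n2" "1 \<le> n1" "1 \<le> n2"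
    and "0 < a1 \<or> 0 < a2"
  obtains j where "1 \<le> j" "j \<le> n1" "j \<le> n2"
    "excess a1 b1 j + excess a2 b2 j = (a2 - b1) + excess (attach_alpha a1 b1 a2 b2) (b1 - a2) 0"
proof -
  obtain j where j: "j \<le> n2" "j \<le> n1"
    "excess a1 b1 j + excess a2 b2 j = (a2 - b1) + excess (attach_alpha a1 b1 a2 b2) (b1 - a2) 0"
    using excess_attach_split[OF assms(1-4), of 0] by auto
  show thesis
  proof (cases "j = 0")
    case False
    then have "1 \<le> j" by simp
    then show thesis using that j by blast
  next
    case True
    have "excess a1 b1 1 + excess a2 b2 1 \<le> excess a1 b1 0 + excess a2 b2 0"
      using assms(1,2,7) unfolding even_gap_def excess_def by auto
    moreover have "(a2 - b1) + excess (attach_alpha a1 b1 a2 b2) (b1 - a2) 0 \<le>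
        excess a1 b1 (0 + 1) + excess a2 b2 1"
      using excess_attach_le[OF assms(1,2)] .
    ultimately show thesis using that[of 1] j True assms(5,6) by simp
  qed
qed

definition profile :: "(nat \<Rightarrow> enat) \<Rightarrow> nat \<Rightarrow> nat \<Rightarrow> nat \<Rightarrow> nat \<Rightarrow> bool" where
  "profile g n m a b \<longleftrightarrow> even_gap a b \<and> b \<le> n \<and> (\<forall>k\<le>n. g k = enat (m + excess a b k))"

lemma profile_change_at_zero:
  assumes "even b" "b \<le> n" "1 \<le> n" "\<And>k. 1 \<le> k \<Longrightarrow> k \<le> n \<Longrightarrow> g k = enat (m + excess 0 b k)"
    and "g 0 = enat m \<or> g 0 = enat (m + 2)"
  shows "\<exists>m a b. profile g n m a b"
proof -
  have g: "g k = enat (m + excess 0 b k)" if "0 < k" "k \<le> n" for k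
    using assms(4) that by simp
  consider "g 0 = enat m" | "g 0 = enat (m + 2)" "b = 0" | "g 0 = enat (m + 2)" "2 \<le> b"
    using assms(1,5) by fastforce
  then show ?thesis
  proof cases
    case 1
    then have "profile g n m 0 b"
      using g assms(1,2) unfolding profile_def even_gap_def by (auto simp: excess_def)
    then show ?thesis by blast
  next
    case 2
    have "g k = enat (m + 1 + excess 1 1 k)" if "k \<le> n" for k
      using 2 g[of k] that by (cases "k = 0") (auto simp: excess_def)
    then have "profile g n (m + 1) 1 1"
      using assms(3) unfolding profile_def even_gap_def by auto
    then show ?thesis by blast
  next
    case 3
    have shift: "excess 0 b k = excess 2 b k" if "0 < k" for k
    proof -
      consider "k = 1" | "k = 2" | "3 \<le> k" using \<open>0 < k\<close> by arith
      then show ?thesis using 3(2) assms(1) unfolding excess_def by cases auto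
    qed
    have "g k = enat (m + excess 2 b k)" if "k \<le> n" for k
    proof (cases "k = 0")
      case True
      then show ?thesis using 3(1) by (simp add: excess_def)
    next
      case False
      then show ?thesis using g[of k] shift[of k] that by simp
    qed
    then have "profile g n m 2 b"
      using 3(2) assms(1,2) unfolding profile_def even_gap_def by auto
    then show ?thesis by blast
  qed
qed

lemma profile_Min_Least_Greatest:
  assumes "profile g n m a b"
  shows "Min (g ` {0..n}) = enat m"
    "(LEAST k. k \<le> n \<and> g k = Min (g ` {0..n})) = a"
    "(GREATEST k. k \<le> n \<and> g k = Min (g ` {0..n})) = b"
proof -
  have ab: "a \<le> b" "b \<le> n" "even (b - a)" and g: "\<And>k. k \<le> n \<Longrightarrow> g k = enat (m + excess a b k)"
    using assms unfolding profile_def even_gap_def by auto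
  have zero: "excess a b k = 0 \<longleftrightarrow> a \<le> k \<and> k \<le> b \<and> even (k - a)" for k
    using ab(1,3) unfolding excess_def by (cases "k = a") auto
  show Min: "Min (g ` {0..n}) = enat m"
  proof (rule Min_eqI)
    show "enat m \<in> g ` {0..n}" using g[of a] zero[of a] ab by (intro image_eqI[of _ _ a]) auto
  qed (use g in auto)
  have min_iff: "k \<le> n \<and> g k = Min (g ` {0..n}) \<longleftrightarrow> k \<le> n \<and> a \<le> k \<and> k \<le> b \<and> even (k - a)" for k
    unfolding Min using g[of k] zero[of k] by auto
  show "(LEAST k. k \<le> n \<and> g k = Min (g ` {0..n})) = a"
    unfolding min_iff using ab by (intro Least_equality) auto
  show "(GREATEST k. k \<le> n \<and> g k = Min (g ` {0..n})) = b"
    unfolding min_iff using ab by (intro Greatest_equality) auto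
qed

definition cross :: "'a set \<Rightarrow> 'a set \<Rightarrow> 'a set set" where
  "cross A B = {{u, w} | u w. u \<in> A \<and> w \<in> B}"

lemma cross_commute: "cross A B = cross B A"
  unfolding cross_def by (auto simp: insert_commute)

lemma doubleton_in_cross: "x \<in> A \<Longrightarrow> y \<in> B \<Longrightarrow> {x, y} \<in> cross A B"
  unfolding cross_def by auto

lemma doubleton_in_crossD: "{x, y} \<in> cross A B \<Longrightarrow> (x \<in> A \<and> y \<in> B) \<or> (x \<in> B \<and> y \<in> A)"
  unfolding cross_def by (auto simp: doubleton_eq_iff)

lemma tedges_cross_node:
  "tedges (Node TrueTwin l r) = tedges l \<union> tedges r \<union> cross (tts l) (tts r)"
  "tedges (Node Attach l r) = tedges l \<union> tedges r \<union> cross (tts l) (tts r)"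
  by (simp_all add: cross_def)

lemma tedges_node_subset: "tedges (Node c l r) \<subseteq> tedges l \<union> tedges r \<union> cross (tts l) (tts r)"
  by (cases c) (auto simp: cross_def)

lemma tedges_children_subset: "tedges l \<subseteq> tedges (Node c l r)" "tedges r \<subseteq> tedges (Node c l r)"
  by (cases c; auto)+

lemma tts_node_subset: "tts (Node c l r) \<subseteq> tts l \<union> tts r"
  by (cases c) auto

lemma finite_leaves [simp]: "finite (leaves v)"
  by (induction v) auto

lemma tts_subset_leaves: "tts v \<subseteq> leaves v"
  by (induction v rule: tts.induct) auto

lemma tts_nonempty: "tts v \<noteq> {}"
  by (induction v rule: tts.induct) auto

lemma finite_tts [simp]: "finite (tts v)"
  using finite_subset[OF tts_subset_leaves] by simp

lemma one_le_card_tts: "1 \<le> card (tts v)"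
  using tts_nonempty[of v] by (simp add: Suc_le_eq card_gt_0_iff)

lemma tedges_subset_leaves: "e \<in> tedges v \<Longrightarrow> e \<subseteq> leaves v"
proof (induction v arbitrary: e rule: tedges.induct)
  case (2 l r) then show ?case using tts_subset_leaves by fastforce
next
  case (4 l r) then show ?case using tts_subset_leaves by fastforce
qed auto

lemma tts_disjoint: "leaves l \<inter> leaves r = {} \<Longrightarrow> tts l \<inter> tts r = {}"
  using tts_subset_leaves[of l] tts_subset_leaves[of r] by blast

lemma card_tts_node:
  assumes "distinct_leaves (Node c l r)" "c \<noteq> Attach"
  shows "card (tts (Node c l r)) = card (tts l) + card (tts r)"
proof -
  have "tts (Node c l r) = tts l \<union> tts r" using assms(2) by (cases c) auto
  then show ?thesis using tts_disjoint[of l r] assms(1) by (simp add: card_Un_disjoint)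
qed

lemma subtree_distinct_leaves_tedges:
  "v \<in> subtrees T \<Longrightarrow> distinct_leaves T \<Longrightarrow> distinct_leaves v \<and> tedges v \<subseteq> tedges T"
proof (induction T)
  case (Node c l r)
  show ?case
  proof (cases "v = Node c l r")
    case False
    then have "v \<in> subtrees l \<or> v \<in> subtrees r" using Node.prems(1) by simp
    moreover have "tedges l \<subseteq> tedges (Node c l r)" "tedges r \<subseteq> tedges (Node c l r)"
      by (rule tedges_children_subset)+
    ultimately show ?thesis using Node by auto
  qed (use Node.prems in simp)
qed simp

lemma card_Int_split:
  assumes "finite A" "A \<subseteq> L \<union> R" "L \<inter> R = {}"
  shows "card A = card (A \<inter> L) + card (A \<inter> R)"
proof -
  have "A = (A \<inter> L) \<union> (A \<inter> R)" using assms(2) by blast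
  then show ?thesis using card_Un_disjoint[of "A \<inter> L" "A \<inter> R"] assms(1,3) by auto
qed

section \<open>Perfect matchings\<close>

lemma has_perfect_matching_mono:
  assumes "has_perfect_matching E W" "E \<subseteq> E'"
  shows "has_perfect_matching E' W"
proof -
  obtain M where "M \<subseteq> E" "\<forall>e\<in>M. e \<subseteq> W" "\<forall>e\<in>M. \<forall>e'\<in>M. e \<noteq> e' \<longrightarrow> e \<inter> e' = {}" "\<Union>M = W"
    using assms(1) unfolding has_perfect_matching_def by blast
  then show ?thesis unfolding has_perfect_matching_def using assms(2) by (intro exI[of _ M]) auto
qed

lemma has_perfect_matching_empty: "has_perfect_matching E {}"
  unfolding has_perfect_matching_def by (intro exI[of _ "{}"]) auto

lemma has_perfect_matching_Un:
  assumes "has_perfect_matching E1 W1" "has_perfect_matching E2 W2" "W1 \<inter> W2 = {}"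
  shows "has_perfect_matching (E1 \<union> E2) (W1 \<union> W2)"
proof -
  obtain M1 where M1: "M1 \<subseteq> E1" "\<forall>e\<in>M1. e \<subseteq> W1" "\<forall>e\<in>M1. \<forall>e'\<in>M1. e \<noteq> e' \<longrightarrow> e \<inter> e' = {}"
    "\<Union>M1 = W1"
    using assms(1) unfolding has_perfect_matching_def by blast
  obtain M2 where M2: "M2 \<subseteq> E2" "\<forall>e\<in>M2. e \<subseteq> W2" "\<forall>e\<in>M2. \<forall>e'\<in>M2. e \<noteq> e' \<longrightarrow> e \<inter> e' = {}"
    "\<Union>M2 = W2"
    using assms(2) unfolding has_perfect_matching_def by blast
  have "e \<inter> e' = {}" if e: "e \<in> M1 \<union> M2" "e' \<in> M1 \<union> M2" "e \<noteq> e'" for e e'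
  proof -
    from e(1,2) consider "e \<in> M1" "e' \<in> M1" | "e \<in> M1" "e' \<in> M2" | "e \<in> M2" "e' \<in> M1"
      | "e \<in> M2" "e' \<in> M2"
      by blast
    then show ?thesis
    proof cases
      case 1 then show ?thesis using M1(3) e(3) by simp
    next
      case 2 then have "e \<subseteq> W1" "e' \<subseteq> W2" using M1(2) M2(2) by auto
      then show ?thesis using assms(3) by auto
    next
      case 3 then have "e \<subseteq> W2" "e' \<subseteq> W1" using M1(2) M2(2) by auto
      then show ?thesis using assms(3) by auto
    next
      case 4 then show ?thesis using M2(3) e(3) by simp
    qed
  qed
  then show ?thesis unfolding has_perfect_matching_def
    using M1 M2 by (intro exI[of _ "M1 \<union> M2"]) auto
qed

lemma has_perfect_matching_insert_edge:
  assumes "has_perfect_matching E W" "{u, w} \<in> E" "u \<notin> W" "w \<notin> W"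
  shows "has_perfect_matching E (W \<union> {u, w})"
proof -
  obtain M where M: "M \<subseteq> E" "\<forall>e\<in>M. e \<subseteq> W" "\<forall>e\<in>M. \<forall>e'\<in>M. e \<noteq> e' \<longrightarrow> e \<inter> e' = {}" "\<Union>M = W"
    using assms(1) unfolding has_perfect_matching_def by blast
  have "\<forall>e\<in>insert {u, w} M. \<forall>e'\<in>insert {u, w} M. e \<noteq> e' \<longrightarrow> e \<inter> e' = {}"
    using M(2,3) assms(3,4) by blast
  then show ?thesis unfolding has_perfect_matching_def
    using M assms(2) by (intro exI[of _ "insert {u, w} M"]) auto
qed

lemma has_perfect_matching_even_card:
  assumes "has_perfect_matching E W" "finite W" "\<forall>e\<in>E. card e = 2"
  shows "even (card W)"
proof -
  obtain M where M: "M \<subseteq> E" "\<forall>e\<in>M. e \<subseteq> W" "\<forall>e\<in>M. \<forall>e'\<in>M. e \<noteq> e' \<longrightarrow> e \<inter> e' = {}" "\<Union>M = W"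
    using assms(1) unfolding has_perfect_matching_def by blast
  have "card W = sum card M"
    unfolding M(4)[symmetric] by (rule card_Union_disjoint)
      (use M(2,3) assms(2) in \<open>auto simp: pairwise_def disjnt_def intro: finite_subset\<close>)
  also have "\<dots> = sum (\<lambda>_. 2) M" using M(1) assms(3) by (intro sum.cong) auto
  also have "\<dots> = 2 * card M" by simp
  finally show ?thesis by simp
qed

lemma has_perfect_matching_restrict:
  assumes "has_perfect_matching (El \<union> Er) W" "\<forall>e\<in>El. e \<subseteq> L" "\<forall>e\<in>Er. e \<subseteq> R" "L \<inter> R = {}"
  shows "has_perfect_matching El (W \<inter> L)"
proof -
  obtain M where M: "M \<subseteq> El \<union> Er" "\<forall>e\<in>M. e \<subseteq> W" "\<forall>e\<in>M. \<forall>e'\<in>M. e \<noteq> e' \<longrightarrow> e \<inter> e' = {}"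
    "\<Union>M = W"
    using assms(1) unfolding has_perfect_matching_def by blast
  have "\<Union>{e \<in> M. e \<in> El} = W \<inter> L"
  proof
    show "\<Union>{e \<in> M. e \<in> El} \<subseteq> W \<inter> L" using M(2) assms(2) by blast
    show "W \<inter> L \<subseteq> \<Union>{e \<in> M. e \<in> El}"
    proof
      fix x assume x: "x \<in> W \<inter> L"
      then obtain e where e: "e \<in> M" "x \<in> e" using M(4) by blast
      then have "e \<notin> Er" using x assms(3,4) by blast
      then show "x \<in> \<Union>{e \<in> M. e \<in> El}" using e M(1) by blast
    qed
  qed
  then show ?thesis unfolding has_perfect_matching_def
    using M by (intro exI[of _ "{e \<in> M. e \<in> El}"]) auto
qed

lemma has_perfect_matching_Diff_edge:
  assumes "M \<subseteq> E" "\<forall>e\<in>M. e \<subseteq> W" "\<forall>e\<in>M. \<forall>e'\<in>M. e \<noteq> e' \<longrightarrow> e \<inter> e' = {}" "\<Union>M = W"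
    "e \<in> M"
  shows "has_perfect_matching E (W - e)"
proof -
  have "\<Union>(M - {e}) = W - e"
  proof
    show "\<Union>(M - {e}) \<subseteq> W - e" using assms by blast
    show "W - e \<subseteq> \<Union>(M - {e})" using assms(4) by blast
  qed
  then show ?thesis unfolding has_perfect_matching_def
    using assms by (intro exI[of _ "M - {e}"]) auto
qed

lemma has_perfect_matching_uncross:
  assumes "has_perfect_matching (El \<union> Er \<union> cross Tl Tr) W" "finite W" "Tl \<inter> Tr = {}"
  shows "\<exists>Y. Y \<subseteq> W \<and> Y \<subseteq> Tl \<union> Tr \<and> card (Y \<inter> Tl) = card (Y \<inter> Tr) \<and>
    has_perfect_matching (El \<union> Er) (W - Y)"
  using assms
proof (induction "card W" arbitrary: W rule: less_induct)
  case less
  obtain M where M: "M \<subseteq> El \<union> Er \<union> cross Tl Tr" "\<forall>e\<in>M. e \<subseteq> W"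
    "\<forall>e\<in>M. \<forall>e'\<in>M. e \<noteq> e' \<longrightarrow> e \<inter> e' = {}" "\<Union>M = W"
    using less.prems(1) unfolding has_perfect_matching_def by blast
  show ?case
  proof (cases "M \<subseteq> El \<union> Er")
    case True
    then have "has_perfect_matching (El \<union> Er) W"
      unfolding has_perfect_matching_def using M by (intro exI[of _ M]) auto
    then show ?thesis by (intro exI[of _ "{}"]) auto
  next
    case False
    then obtain u w where e: "{u, w} \<in> M" "u \<in> Tl" "w \<in> Tr"
      using M(1) unfolding cross_def by blast
    have uw: "u \<in> W" "w \<in> W" "u \<notin> Tr" "w \<notin> Tl" using e M(2) less.prems(3) by auto
    have "has_perfect_matching (El \<union> Er \<union> cross Tl Tr) (W - {u, w})"
      using has_perfect_matching_Diff_edge[OF M e(1)] .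
    moreover have "card (W - {u, w}) < card W"
      using uw(1,2) less.prems(2) by (intro psubset_card_mono) auto
    ultimately obtain Y where Y: "Y \<subseteq> W - {u, w}" "Y \<subseteq> Tl \<union> Tr"
      "card (Y \<inter> Tl) = card (Y \<inter> Tr)" "has_perfect_matching (El \<union> Er) (W - {u, w} - Y)"
      using less.hyps[of "W - {u, w}"] less.prems(2,3) by auto
    have "finite Y" "u \<notin> Y" "w \<notin> Y" using Y(1) less.prems(2) finite_subset by auto
    have c: "insert u (insert w Y) \<inter> Tl = insert u (Y \<inter> Tl)"
      "insert u (insert w Y) \<inter> Tr = insert w (Y \<inter> Tr)" using e(2,3) uw(3,4) by auto
    have "card (insert u (insert w Y) \<inter> Tl) = card (insert u (insert w Y) \<inter> Tr)"
      unfolding c using \<open>finite Y\<close> \<open>u \<notin> Y\<close> \<open>w \<notin> Y\<close> Y(3) by simp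
    moreover have "W - insert u (insert w Y) = W - {u, w} - Y" by auto
    ultimately show ?thesis using Y uw e(2,3)
      by (intro exI[of _ "insert u (insert w Y)"]) auto
  qed
qed

lemma has_perfect_matching_cross:
  assumes "has_perfect_matching E W" "finite Y" "Y \<inter> W = {}" "Y \<subseteq> Tl \<union> Tr"
    "card (Y \<inter> Tl) = card (Y \<inter> Tr)" "cross Tl Tr \<subseteq> E" "Tl \<inter> Tr = {}"
  shows "has_perfect_matching E (W \<union> Y)"
  using assms
proof (induction "card (Y \<inter> Tl)" arbitrary: Y W)
  case 0
  then have "Y = {}" by (auto simp: card_eq_0_iff)
  then show ?case using 0 by simp
next
  case (Suc n)
  obtain u w where u: "u \<in> Y" "u \<in> Tl" and w: "w \<in> Y" "w \<in> Tr"
    using Suc.hyps(2) Suc.prems(5) by (metis Int_iff card.empty ex_in_conv nat.distinct(1))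
  have uw: "u \<notin> Tr" "w \<notin> Tl" using u w Suc.prems(7) by auto
  define Y' where "Y' = Y - {u, w}"
  have c: "Y' \<inter> Tl = (Y \<inter> Tl) - {u}" "Y' \<inter> Tr = (Y \<inter> Tr) - {w}" using uw unfolding Y'_def by auto
  have "finite (Y \<inter> Tl)" "finite (Y \<inter> Tr)" using Suc.prems(2) by auto
  then have "n = card (Y' \<inter> Tl)" "card (Y' \<inter> Tl) = card (Y' \<inter> Tr)"
    unfolding c using Suc.hyps(2) Suc.prems(5) u w by simp_all
  then have "has_perfect_matching E (W \<union> Y')"
    using Suc.hyps(1)[of Y' W] Suc.prems unfolding Y'_def by auto
  then have "has_perfect_matching E ((W \<union> Y') \<union> {u, w})"
    by (rule has_perfect_matching_insert_edge)
      (use u w Suc.prems(3,6) doubleton_in_cross[of u Tl w Tr] in \<open>auto simp: Y'_def\<close>)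
  moreover have "(W \<union> Y') \<union> {u, w} = W \<union> Y" using u w unfolding Y'_def by auto
  ultimately show ?case by simp
qed

section \<open>Feasible sets at a node\<close>

definition feasible_with :: "'a dtree \<Rightarrow> 'a set \<Rightarrow> 'a set \<Rightarrow> bool" where
  "feasible_with v S X \<longleftrightarrow> S \<subseteq> leaves v \<and> leaves v - tts v \<subseteq> closed_nbhd (tedges v) S \<and>
     X \<subseteq> S \<inter> tts v \<and> has_perfect_matching (tedges v) (S - X)"

lemma k_feasible_iff: "k_feasible v k S \<longleftrightarrow> (\<exists>X. feasible_with v S X \<and> card X = k)"
  unfolding k_feasible_def feasible_with_def by blast

lemma feasible_withD:
  assumes "feasible_with v S X"
  shows "S \<subseteq> leaves v" "X \<subseteq> S" "X \<subseteq> tts v" "leaves v - tts v \<subseteq> closed_nbhd (tedges v) S"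
    "has_perfect_matching (tedges v) (S - X)" "finite S" "finite X"
proof -
  show S: "S \<subseteq> leaves v" "X \<subseteq> S" "X \<subseteq> tts v" "leaves v - tts v \<subseteq> closed_nbhd (tedges v) S"
    "has_perfect_matching (tedges v) (S - X)" using assms unfolding feasible_with_def by auto
  show "finite S" using finite_subset[OF S(1)] by simp
  then show "finite X" using S(2) finite_subset by blast
qed

lemma k_feasible_le_card_tts: "k_feasible v k S \<Longrightarrow> k \<le> card (tts v)"
  unfolding k_feasible_def by (auto intro: card_mono)

lemma closed_nbhd_mono: "E \<subseteq> E' \<Longrightarrow> S \<subseteq> S' \<Longrightarrow> closed_nbhd E S \<subseteq> closed_nbhd E' S'"
  unfolding closed_nbhd_def by blast

lemma closed_nbhd_restrict:
  assumes "\<forall>e\<in>El. e \<subseteq> L" "\<forall>e\<in>Er. e \<subseteq> R" "L \<inter> R = {}" "Tr \<subseteq> R"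
    and "x \<in> L" "x \<notin> Tl" "x \<in> closed_nbhd (El \<union> Er \<union> cross Tl Tr) S"
  shows "x \<in> closed_nbhd El (S \<inter> L)"
proof (cases "x \<in> S")
  case True
  then show ?thesis using assms(5) unfolding closed_nbhd_def by blast
next
  case False
  then obtain w where w: "w \<in> S" "{x, w} \<in> El \<union> Er \<union> cross Tl Tr"
    using assms(7) unfolding closed_nbhd_def by blast
  have "{x, w} \<notin> Er" using assms(2,3,5) by blast
  moreover have "{x, w} \<notin> cross Tl Tr"
    using doubleton_in_crossD[of x w Tl Tr] assms(3-6) by blast
  ultimately have "{x, w} \<in> El" using w(2) by blast
  moreover then have "w \<in> L" using assms(1) by blast
  ultimately show ?thesis using w(1) unfolding closed_nbhd_def by blast
qed

lemma k_feasible_left_child: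
  assumes "leaves l \<inter> leaves r = {}" "X \<subseteq> S" "X \<inter> leaves l \<subseteq> tts l"
    and "has_perfect_matching (tedges l \<union> tedges r) (S - X)"
    and "leaves l - tts l \<subseteq> closed_nbhd (tedges l \<union> tedges r \<union> cross (tts l) (tts r)) S"
  shows "k_feasible l (card (X \<inter> leaves l)) (S \<inter> leaves l)"
proof -
  have edges: "\<forall>e\<in>tedges l. e \<subseteq> leaves l" "\<forall>e\<in>tedges r. e \<subseteq> leaves r"
    using tedges_subset_leaves by blast+
  have "has_perfect_matching (tedges l) ((S - X) \<inter> leaves l)"
    using has_perfect_matching_restrict[OF assms(4) edges assms(1)] .
  moreover have "(S - X) \<inter> leaves l = S \<inter> leaves l - X \<inter> leaves l" by blast
  moreover have "leaves l - tts l \<subseteq> closed_nbhd (tedges l) (S \<inter> leaves l)"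
    using closed_nbhd_restrict[OF edges assms(1) tts_subset_leaves] assms(5) by blast
  ultimately show ?thesis unfolding k_feasible_def using assms(2,3)
    by (intro conjI exI[of _ "X \<inter> leaves l"]) auto
qed

lemma k_feasible_children:
  assumes "distinct_leaves (Node c l r)" "X \<subseteq> S" "X \<inter> leaves l \<subseteq> tts l" "X \<inter> leaves r \<subseteq> tts r"
    and "has_perfect_matching (tedges l \<union> tedges r) (S - X)"
    and "leaves (Node c l r) - tts (Node c l r) \<subseteq> closed_nbhd (tedges (Node c l r)) S"
  shows "k_feasible l (card (X \<inter> leaves l)) (S \<inter> leaves l)"
    "k_feasible r (card (X \<inter> leaves r)) (S \<inter> leaves r)"
proof -
  let ?E = "tedges l \<union> tedges r \<union> cross (tts l) (tts r)"
  have dl: "leaves l \<inter> leaves r = {}" using assms(1) by simp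
  have "tts (Node c l r) \<subseteq> tts l \<union> tts r" "tts l \<subseteq> leaves l" "tts r \<subseteq> leaves r"
    by (rule tts_node_subset tts_subset_leaves)+
  then have "(leaves l - tts l) \<union> (leaves r - tts r) \<subseteq> leaves (Node c l r) - tts (Node c l r)"
    unfolding leaves.simps using dl by blast
  also have "\<dots> \<subseteq> closed_nbhd ?E S"
    by (rule subset_trans[OF assms(6) closed_nbhd_mono[OF tedges_node_subset order_refl]])
  finally have dom: "leaves l - tts l \<subseteq> closed_nbhd ?E S" "leaves r - tts r \<subseteq> closed_nbhd ?E S"
    by auto
  show "k_feasible l (card (X \<inter> leaves l)) (S \<inter> leaves l)"
    using k_feasible_left_child[OF dl assms(2,3,5) dom(1)] .
  have "?E = tedges r \<union> tedges l \<union> cross (tts r) (tts l)" using cross_commute by blast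
  then have "leaves r - tts r \<subseteq> closed_nbhd (tedges r \<union> tedges l \<union> cross (tts r) (tts l)) S"
    using dom(2) by simp
  moreover have "has_perfect_matching (tedges r \<union> tedges l) (S - X)"
    using assms(5) by (simp add: Un_commute)
  moreover have "leaves r \<inter> leaves l = {}" using dl by blast
  ultimately show "k_feasible r (card (X \<inter> leaves r)) (S \<inter> leaves r)"
    using k_feasible_left_child assms(2,4) by blast
qed

lemma k_feasible_FalseTwin_split:
  assumes "distinct_leaves (Node FalseTwin l r)" "k_feasible (Node FalseTwin l r) k S"
  obtains k1 k2 where "k = k1 + k2" "k_feasible l k1 (S \<inter> leaves l)" "k_feasible r k2 (S \<inter> leaves r)"
proof -
  obtain X where X: "feasible_with (Node FalseTwin l r) S X" "card X = k"
    using assms(2) k_feasible_iff by blast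
  note fX = feasible_withD[OF X(1)]
  have dl: "leaves l \<inter> leaves r = {}" using assms(1) by simp
  have Xl: "X \<inter> leaves l \<subseteq> tts l" and Xr: "X \<inter> leaves r \<subseteq> tts r"
    using fX(3) tts_subset_leaves[of l] tts_subset_leaves[of r] dl by auto
  have pm: "has_perfect_matching (tedges l \<union> tedges r) (S - X)" using fX(5) by simp
  note children = k_feasible_children[OF assms(1) fX(2) Xl Xr pm fX(4)]
  have "card X = card (X \<inter> leaves l) + card (X \<inter> leaves r)"
    using card_Int_split[OF fX(7) _ dl] fX(1,2) by auto
  then show thesis using that children X(2) by simp
qed

lemma k_feasible_uncross_split:
  assumes "distinct_leaves (Node c l r)" "feasible_with (Node c l r) S X"
  obtains j where "k_feasible l (card (X \<inter> leaves l) + j) (S \<inter> leaves l)"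
    "k_feasible r (card (X \<inter> leaves r) + j) (S \<inter> leaves r)"
proof -
  note fX = feasible_withD[OF assms(2)]
  have dl: "leaves l \<inter> leaves r = {}" using assms(1) by simp
  have tl: "tts l \<subseteq> leaves l" "tts r \<subseteq> leaves r" by (rule tts_subset_leaves)+
  have Xt: "X \<subseteq> tts l \<union> tts r" using subset_trans[OF fX(3) tts_node_subset] .
  have pmX: "has_perfect_matching (tedges l \<union> tedges r \<union> cross (tts l) (tts r)) (S - X)"
    using has_perfect_matching_mono[OF fX(5) tedges_node_subset] .
  obtain Y where Y: "Y \<subseteq> S - X" "Y \<subseteq> tts l \<union> tts r" "card (Y \<inter> tts l) = card (Y \<inter> tts r)"
    "has_perfect_matching (tedges l \<union> tedges r) (S - X - Y)"
    using has_perfect_matching_uncross[OF pmX _ tts_disjoint[OF dl]] fX(6) by blast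
  have XY: "X \<union> Y \<subseteq> S" "(X \<union> Y) \<inter> leaves l \<subseteq> tts l" "(X \<union> Y) \<inter> leaves r \<subseteq> tts r"
    using fX(2) Y(1,2) Xt tl dl by auto
  have pm: "has_perfect_matching (tedges l \<union> tedges r) (S - (X \<union> Y))"
    using Y(4) by (simp add: Diff_Un set_diff_eq)
  note children = k_feasible_children[OF assms(1) XY pm fX(4)]
  have fin: "finite X" "finite Y" "X \<inter> Y = {}" using fX(6,7) Y(1) finite_subset by auto
  have "(X \<union> Y) \<inter> leaves l = (X \<inter> leaves l) \<union> (Y \<inter> tts l)"
    "(X \<union> Y) \<inter> leaves r = (X \<inter> leaves r) \<union> (Y \<inter> tts r)"
    using Y(2) tl dl by auto
  then have "card ((X \<union> Y) \<inter> leaves l) = card (X \<inter> leaves l) + card (Y \<inter> tts l)"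
    "card ((X \<union> Y) \<inter> leaves r) = card (X \<inter> leaves r) + card (Y \<inter> tts l)"
    using fin Y(3) by (simp_all add: card_Un_disjoint disjoint_iff)
  then show thesis using that[of "card (Y \<inter> tts l)"] children by simp
qed

lemma k_feasible_TrueTwin_split:
  assumes "distinct_leaves (Node TrueTwin l r)" "k_feasible (Node TrueTwin l r) k S"
  obtains x1 x2 j where "k = x1 + x2"
    "k_feasible l (x1 + j) (S \<inter> leaves l)" "k_feasible r (x2 + j) (S \<inter> leaves r)"
proof -
  obtain X where X: "feasible_with (Node TrueTwin l r) S X" "card X = k"
    using assms(2) k_feasible_iff by blast
  note fX = feasible_withD[OF X(1)]
  have "X \<subseteq> leaves l \<union> leaves r" using fX(1,2) by auto
  then have k: "k = card (X \<inter> leaves l) + card (X \<inter> leaves r)"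
    using card_Int_split[OF fX(7)] assms(1) X(2) by simp
  obtain j where "k_feasible l (card (X \<inter> leaves l) + j) (S \<inter> leaves l)"
    "k_feasible r (card (X \<inter> leaves r) + j) (S \<inter> leaves r)"
    using k_feasible_uncross_split[OF assms(1) X(1)] .
  then show thesis using that[OF k] by blast
qed

lemma k_feasible_Attach_split:
  assumes "distinct_leaves (Node Attach l r)" "k_feasible (Node Attach l r) k S"
  obtains j where "k_feasible l (k + j) (S \<inter> leaves l)" "k_feasible r j (S \<inter> leaves r)"
proof -
  obtain X where X: "feasible_with (Node Attach l r) S X" "card X = k"
    using assms(2) k_feasible_iff by blast
  have "X \<subseteq> tts l" using feasible_withD(3)[OF X(1)] by simp
  then have "X \<inter> leaves l = X" "X \<inter> leaves r = {}"
    using tts_subset_leaves[of l] assms(1) by auto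
  moreover obtain j where "k_feasible l (card (X \<inter> leaves l) + j) (S \<inter> leaves l)"
    "k_feasible r (card (X \<inter> leaves r) + j) (S \<inter> leaves r)"
    using k_feasible_uncross_split[OF assms(1) X(1)] .
  ultimately show thesis using that[of j] X(2) by simp
qed

lemma card_k_feasible_split:
  assumes "distinct_leaves (Node c l r)" "k_feasible (Node c l r) k S"
  shows "card S = card (S \<inter> leaves l) + card (S \<inter> leaves r)"
proof -
  have S: "S \<subseteq> leaves l \<union> leaves r" using assms(2) unfolding k_feasible_def by simp
  then have "finite S" using finite_subset[OF S] by simp
  then show ?thesis using card_Int_split[OF _ S] assms(1) by simp
qed

lemma card_Un_children:
  assumes "leaves l \<inter> leaves r = {}" "k_feasible l k1 S1" "k_feasible r k2 S2"
  shows "card (S1 \<union> S2) = card S1 + card S2"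
proof -
  have "S1 \<subseteq> leaves l" "S2 \<subseteq> leaves r" using assms(2,3) unfolding k_feasible_def by auto
  then show ?thesis using assms(1) finite_subset[of S1] finite_subset[of S2]
    by (intro card_Un_disjoint) auto
qed

lemma closed_nbhd_Un_children:
  assumes "feasible_with l S1 X1" "feasible_with r S2 X2" "tedges l \<union> tedges r \<subseteq> E"
  shows "(leaves l \<union> leaves r) - (tts l \<union> tts r) \<subseteq> closed_nbhd E (S1 \<union> S2)"
proof -
  have "leaves l - tts l \<subseteq> closed_nbhd E (S1 \<union> S2)"
    by (rule subset_trans[OF feasible_withD(4)[OF assms(1)] closed_nbhd_mono]) (use assms(3) in auto)
  moreover have "leaves r - tts r \<subseteq> closed_nbhd E (S1 \<union> S2)"
    by (rule subset_trans[OF feasible_withD(4)[OF assms(2)] closed_nbhd_mono]) (use assms(3) in auto)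
  ultimately show ?thesis by blast
qed

lemma k_feasible_FalseTwin_union:
  assumes "distinct_leaves (Node FalseTwin l r)" "k_feasible l k1 S1" "k_feasible r k2 S2"
  shows "k_feasible (Node FalseTwin l r) (k1 + k2) (S1 \<union> S2)"
proof -
  have dl: "leaves l \<inter> leaves r = {}" using assms(1) by simp
  obtain X1 where X1: "feasible_with l S1 X1" "card X1 = k1" using assms(2) k_feasible_iff by blast
  obtain X2 where X2: "feasible_with r S2 X2" "card X2 = k2" using assms(3) k_feasible_iff by blast
  note f1 = feasible_withD[OF X1(1)] and f2 = feasible_withD[OF X2(1)]
  have "has_perfect_matching (tedges l \<union> tedges r) ((S1 - X1) \<union> (S2 - X2))"
    by (rule has_perfect_matching_Un[OF f1(5) f2(5)]) (use f1(1) f2(1) dl in auto)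
  moreover have "(S1 - X1) \<union> (S2 - X2) = (S1 \<union> S2) - (X1 \<union> X2)" using f1(1,2) f2(1,2) dl by blast
  ultimately have "has_perfect_matching (tedges l \<union> tedges r) ((S1 \<union> S2) - (X1 \<union> X2))" by simp
  moreover have "(leaves l \<union> leaves r) - (tts l \<union> tts r) \<subseteq> closed_nbhd (tedges l \<union> tedges r) (S1 \<union> S2)"
    using closed_nbhd_Un_children[OF X1(1) X2(1) order_refl] .
  moreover have "card (X1 \<union> X2) = k1 + k2"
    using card_Un_disjoint[OF f1(7) f2(7)] f1(1,2) f2(1,2) dl X1(2) X2(2) by blast
  ultimately have "feasible_with (Node FalseTwin l r) (S1 \<union> S2) (X1 \<union> X2) \<and> card (X1 \<union> X2) = k1 + k2"
    unfolding feasible_with_def using f1(1-3) f2(1-3) by auto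
  then show ?thesis using k_feasible_iff by blast
qed

lemma has_perfect_matching_pair_twins:
  assumes "leaves l \<inter> leaves r = {}" "feasible_with l S1 X1" "feasible_with r S2 X2"
    and "j \<le> card X1" "j \<le> card X2"
  obtains X where "X \<subseteq> X1 \<union> X2" "card (X \<inter> leaves l) = card X1 - j" "card (X \<inter> leaves r) = card X2 - j"
    "has_perfect_matching (tedges l \<union> tedges r \<union> cross (tts l) (tts r)) ((S1 \<union> S2) - X)"
proof -
  note f1 = feasible_withD[OF assms(2)] and f2 = feasible_withD[OF assms(3)]
  have td: "tts l \<inter> tts r = {}" using tts_disjoint[OF assms(1)] .
  obtain Y1 where Y1: "Y1 \<subseteq> X1" "card Y1 = j" "finite Y1"
    using obtain_subset_with_card_n[OF assms(4)] by blast
  obtain Y2 where Y2: "Y2 \<subseteq> X2" "card Y2 = j" "finite Y2"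
    using obtain_subset_with_card_n[OF assms(5)] by blast
  define W where "W = (S1 - X1) \<union> (S2 - X2)"
  have "has_perfect_matching (tedges l \<union> tedges r) W"
    unfolding W_def by (rule has_perfect_matching_Un[OF f1(5) f2(5)]) (use f1(1) f2(1) assms(1) in auto)
  then have "has_perfect_matching (tedges l \<union> tedges r \<union> cross (tts l) (tts r)) W"
    by (rule has_perfect_matching_mono) blast
  moreover have "(Y1 \<union> Y2) \<inter> tts l = Y1" "(Y1 \<union> Y2) \<inter> tts r = Y2"
    using Y1(1) Y2(1) f1(3) f2(3) td by blast+
  moreover have "(Y1 \<union> Y2) \<inter> W = {}"
    unfolding W_def using Y1(1) Y2(1) f1(1,2) f2(1,2) assms(1) by blast
  ultimately have "has_perfect_matching (tedges l \<union> tedges r \<union> cross (tts l) (tts r)) (W \<union> (Y1 \<union> Y2))"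
    using Y1 Y2 f1(3) f2(3) td by (intro has_perfect_matching_cross[of _ _ _ "tts l" "tts r"]) auto
  moreover have "W \<union> (Y1 \<union> Y2) = (S1 \<union> S2) - ((X1 - Y1) \<union> (X2 - Y2))"
    unfolding W_def using Y1(1) Y2(1) f1(1,2) f2(1,2) assms(1) by blast
  moreover have "(X1 - Y1 \<union> (X2 - Y2)) \<inter> leaves l = X1 - Y1" "(X1 - Y1 \<union> (X2 - Y2)) \<inter> leaves r = X2 - Y2"
    using f1(1,2) f2(1,2) assms(1) by blast+
  moreover have "card (X1 - Y1) = card X1 - j" "card (X2 - Y2) = card X2 - j"
    using card_Diff_subset[OF Y1(3,1)] card_Diff_subset[OF Y2(3,1)] Y1(2) Y2(2) by simp_all
  ultimately show thesis using that[of "(X1 - Y1) \<union> (X2 - Y2)"] by auto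
qed

lemma k_feasible_TrueTwin_union:
  assumes "distinct_leaves (Node TrueTwin l r)" "k_feasible l (x1 + j) S1" "k_feasible r (x2 + j) S2"
  shows "k_feasible (Node TrueTwin l r) (x1 + x2) (S1 \<union> S2)"
proof -
  have dl: "leaves l \<inter> leaves r = {}" using assms(1) by simp
  obtain X1 where X1: "feasible_with l S1 X1" "card X1 = x1 + j" using assms(2) k_feasible_iff by blast
  obtain X2 where X2: "feasible_with r S2 X2" "card X2 = x2 + j" using assms(3) k_feasible_iff by blast
  note f1 = feasible_withD[OF X1(1)] and f2 = feasible_withD[OF X2(1)]
  obtain X where X: "X \<subseteq> X1 \<union> X2" "card (X \<inter> leaves l) = x1" "card (X \<inter> leaves r) = x2"
    "has_perfect_matching (tedges l \<union> tedges r \<union> cross (tts l) (tts r)) ((S1 \<union> S2) - X)"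
    using has_perfect_matching_pair_twins[OF dl X1(1) X2(1), of j] X1(2) X2(2) by auto
  have "(leaves l \<union> leaves r) - (tts l \<union> tts r) \<subseteq>
      closed_nbhd (tedges l \<union> tedges r \<union> cross (tts l) (tts r)) (S1 \<union> S2)"
    using closed_nbhd_Un_children[OF X1(1) X2(1)] by blast
  then have "feasible_with (Node TrueTwin l r) (S1 \<union> S2) X"
    unfolding feasible_with_def tedges_cross_node using X(1,4) f1(1-3) f2(1-3) by auto
  moreover have "card X = x1 + x2"
  proof -
    have "X \<subseteq> leaves l \<union> leaves r" using X(1) f1(1,2) f2(1,2) by blast
    then show ?thesis using card_Int_split[OF finite_subset[OF X(1)] _ dl] X(2,3) f1(7) f2(7) by auto
  qed
  ultimately show ?thesis using k_feasible_iff by blast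
qed

text \<open>The twins of \<open>r\<close> outside \<open>S1 \<union> S2\<close> are dominated through a vertex of \<open>X1 \<subseteq> tts l\<close>;
  this is where \<open>1 \<le> k + j\<close> is needed.\<close>
lemma k_feasible_Attach_union:
  assumes "distinct_leaves (Node Attach l r)" "k_feasible l (k + j) S1" "k_feasible r j S2" "1 \<le> k + j"
  shows "k_feasible (Node Attach l r) k (S1 \<union> S2)"
proof -
  have dl: "leaves l \<inter> leaves r = {}" using assms(1) by simp
  obtain X1 where X1: "feasible_with l S1 X1" "card X1 = k + j" using assms(2) k_feasible_iff by blast
  obtain X2 where X2: "feasible_with r S2 X2" "card X2 = j" using assms(3) k_feasible_iff by blast
  note f1 = feasible_withD[OF X1(1)] and f2 = feasible_withD[OF X2(1)]
  obtain X where X: "X \<subseteq> X1 \<union> X2" "card (X \<inter> leaves l) = k" "card (X \<inter> leaves r) = 0"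
    "has_perfect_matching (tedges l \<union> tedges r \<union> cross (tts l) (tts r)) ((S1 \<union> S2) - X)"
    using has_perfect_matching_pair_twins[OF dl X1(1) X2(1), of j] X1(2) X2(2) by auto
  have fX: "finite X" using finite_subset[OF X(1)] f1(7) f2(7) by blast
  then have "X \<inter> leaves r = {}" using X(3) by simp
  then have Xl: "X \<subseteq> X1" using X(1) f2(1,2) by blast
  have "X \<subseteq> leaves l \<union> leaves r" using X(1) f1(1,2) f2(1,2) by blast
  then have cX: "card X = k" using card_Int_split[OF fX _ dl] X(2,3) by auto
  have "X1 \<noteq> {}" using X1(2) assms(4) by auto
  then obtain t where t: "t \<in> S1" "t \<in> tts l" using f1(2,3) by blast
  have "(leaves l \<union> leaves r) - tts l \<subseteq>
      closed_nbhd (tedges l \<union> tedges r \<union> cross (tts l) (tts r)) (S1 \<union> S2)"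
  proof
    fix x assume x: "x \<in> (leaves l \<union> leaves r) - tts l"
    show "x \<in> closed_nbhd (tedges l \<union> tedges r \<union> cross (tts l) (tts r)) (S1 \<union> S2)"
    proof (cases "x \<in> tts r")
      case True
      then have "{x, t} \<in> cross (tts l) (tts r)"
        using doubleton_in_cross[OF t(2) True] by (simp add: insert_commute)
      then show ?thesis using t(1) unfolding closed_nbhd_def by blast
    next
      case False
      then show ?thesis using x closed_nbhd_Un_children[OF X1(1) X2(1)] by blast
    qed
  qed
  then have "feasible_with (Node Attach l r) (S1 \<union> S2) X"
    unfolding feasible_with_def tedges_cross_node using X(4) Xl f1(1-3) f2(1) by auto
  then show ?thesis using cX k_feasible_iff by blast
qed

section \<open>The profile of \<open>gamma_hat\<close>\<close>

lemma gamma_hat_le: "k_feasible v k S \<Longrightarrow> gamma_hat v k \<le> enat (card S)"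
  unfolding gamma_hat_def by (rule INF_lower) simp

lemma gamma_hat_ge: "(\<And>S. k_feasible v k S \<Longrightarrow> c \<le> card S) \<Longrightarrow> enat c \<le> gamma_hat v k"
  unfolding gamma_hat_def by (rule INF_greatest) simp

lemma gamma_hat_attained:
  assumes "gamma_hat v k = enat c"
  obtains S where "k_feasible v k S" "card S = c"
proof -
  let ?A = "(\<lambda>S. enat (card S)) ` {S. k_feasible v k S}"
  have "?A \<noteq> {}"
  proof
    assume "?A = {}"
    then have "gamma_hat v k = \<infinity>" unfolding gamma_hat_def by (simp add: Inf_enat_def)
    then show False using assms by simp
  qed
  then have "Inf ?A \<in> ?A" unfolding Inf_enat_def by (auto intro: LeastI)
  then show thesis using assms that unfolding gamma_hat_def by auto
qed

lemma gamma_hat_eqI: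
  assumes "k_feasible v k S" "card S = c" "\<And>S'. k_feasible v k S' \<Longrightarrow> c \<le> card S'"
  shows "gamma_hat v k = enat c"
  using gamma_hat_le[OF assms(1)] gamma_hat_ge[of v k c, OF assms(3)] assms(2) by simp

definition well_formed :: "'a dtree \<Rightarrow> bool" where
  "well_formed v \<longleftrightarrow> distinct_leaves v \<and> (\<forall>e\<in>tedges v. card e = 2)"

lemma well_formed_children:
  assumes "well_formed (Node c l r)"
  shows "well_formed l" "well_formed r"
proof -
  have "tedges l \<subseteq> tedges (Node c l r)" "tedges r \<subseteq> tedges (Node c l r)"
    by (rule tedges_children_subset)+
  then show "well_formed l" "well_formed r" using assms unfolding well_formed_def by auto
qed

lemma k_feasible_parity:
  assumes "well_formed v" "k_feasible v k S"
  shows "even (card S + k)"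
proof -
  obtain X where X: "feasible_with v S X" "card X = k" using assms(2) k_feasible_iff by blast
  note fX = feasible_withD[OF X(1)]
  have "even (card (S - X))"
    by (rule has_perfect_matching_even_card[OF fX(5)]) (use fX(6) assms(1) in \<open>auto simp: well_formed_def\<close>)
  moreover have "card (S - X) = card S - card X" by (rule card_Diff_subset[OF fX(7,2)])
  moreover have "card X \<le> card S" by (rule card_mono[OF fX(6,2)])
  ultimately show ?thesis using X(2) by auto
qed

abbreviation gamma_profile :: "'a dtree \<Rightarrow> nat \<Rightarrow> nat \<Rightarrow> nat \<Rightarrow> bool" where
  "gamma_profile v \<equiv> profile (gamma_hat v) (card (tts v))"

lemma gamma_profileD:
  assumes "gamma_profile v m a b"
  shows "even_gap a b" "b \<le> card (tts v)"
    "k \<le> card (tts v) \<Longrightarrow> gamma_hat v k = enat (m + excess a b k)"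
  using assms unfolding profile_def by auto

lemma gamma_profile_attained:
  assumes "gamma_profile v m a b" "k \<le> card (tts v)"
  obtains S where "k_feasible v k S" "card S = m + excess a b k"
  using gamma_hat_attained gamma_profileD(3)[OF assms] by blast

lemma gamma_profile_lower:
  assumes "gamma_profile v m a b" "k_feasible v k S"
  shows "m + excess a b k \<le> card S"
  using gamma_hat_le[OF assms(2)] gamma_profileD(3)[OF assms(1) k_feasible_le_card_tts[OF assms(2)]]
  by simp

lemma gamma_profile_parity:
  assumes "well_formed v" "gamma_profile v m a b"
  shows "even (m + a)"
proof -
  have "a \<le> card (tts v)" "excess a b a = 0"
    using gamma_profileD(1,2)[OF assms(2)] unfolding even_gap_def excess_def by auto
  then obtain S where "k_feasible v a S" "card S = m"
    using gamma_profile_attained[OF assms(2), of a] by auto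
  then show ?thesis using k_feasible_parity[OF assms(1)] by blast
qed

lemma gamma_profile_Leaf: "gamma_profile (Leaf x) 0 0 0"
proof -
  have f0: "k_feasible (Leaf x) 0 {}"
    unfolding k_feasible_def by (intro conjI exI[of _ "{}"]) (simp_all add: has_perfect_matching_empty)
  have f1: "k_feasible (Leaf x) 1 {x}"
    unfolding k_feasible_def by (intro conjI exI[of _ "{x}"]) (simp_all add: has_perfect_matching_empty)
  have "1 \<le> card S" if S: "k_feasible (Leaf x) 1 S" for S
  proof -
    obtain X where "X \<subseteq> S" "card X = 1" "S \<subseteq> {x}"
      using S unfolding k_feasible_def by auto
    then show ?thesis using card_mono[of S X] finite_subset[of S "{x}"] by simp
  qed
  then have "gamma_hat (Leaf x) 1 = enat 1" using gamma_hat_eqI[OF f1] by simp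
  moreover have "gamma_hat (Leaf x) 0 = enat 0" using gamma_hat_eqI[OF f0] by simp
  moreover have "k = 0 \<or> k = 1" if "k \<le> card (tts (Leaf x))" for k using that by auto
  ultimately show ?thesis unfolding profile_def even_gap_def excess_def by auto
qed

lemma gamma_profile_FalseTwin:
  assumes "distinct_leaves (Node FalseTwin l r)" "gamma_profile l m1 a1 b1" "gamma_profile r m2 a2 b2"
  shows "gamma_profile (Node FalseTwin l r) (m1 + m2) (a1 + a2) (b1 + b2)"
proof -
  let ?v = "Node FalseTwin l r" and ?g = "\<lambda>k. m1 + m2 + excess (a1 + a2) (b1 + b2) k"
  have n: "card (tts ?v) = card (tts l) + card (tts r)" using card_tts_node[OF assms(1)] by simp
  note l = gamma_profileD[OF assms(2)] and r = gamma_profileD[OF assms(3)]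
  have dl: "leaves l \<inter> leaves r = {}" using assms(1) by simp
  have lower: "?g k \<le> card S" if S: "k_feasible ?v k S" for k S
  proof -
    obtain k1 k2 where kk: "k = k1 + k2" "k_feasible l k1 (S \<inter> leaves l)" "k_feasible r k2 (S \<inter> leaves r)"
      using k_feasible_FalseTwin_split[OF assms(1) S] .
    have "m1 + excess a1 b1 k1 \<le> card (S \<inter> leaves l)" "m2 + excess a2 b2 k2 \<le> card (S \<inter> leaves r)"
      using gamma_profile_lower[OF assms(2) kk(2)] gamma_profile_lower[OF assms(3) kk(3)] .
    then show ?thesis using excess_add_le[OF l(1) r(1), of k1 k2]
      card_k_feasible_split[OF assms(1) S] unfolding kk(1) by linarith
  qed
  have "gamma_hat ?v k = enat (?g k)" if k: "k \<le> card (tts ?v)" for k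
  proof -
    obtain k1 k2 where kk: "k1 \<le> card (tts l)" "k2 \<le> card (tts r)" "k = k1 + k2"
      "excess a1 b1 k1 + excess a2 b2 k2 = excess (a1 + a2) (b1 + b2) k"
      using excess_add_split[OF l(1) r(1) l(2) r(2)] k unfolding n .
    obtain S1 where S1: "k_feasible l k1 S1" "card S1 = m1 + excess a1 b1 k1"
      using gamma_profile_attained[OF assms(2) kk(1)] .
    obtain S2 where S2: "k_feasible r k2 S2" "card S2 = m2 + excess a2 b2 k2"
      using gamma_profile_attained[OF assms(3) kk(2)] .
    show ?thesis
    proof (rule gamma_hat_eqI[OF _ _ lower])
      show "k_feasible ?v k (S1 \<union> S2)" using k_feasible_FalseTwin_union[OF assms(1) S1(1) S2(1)] kk(3) by simp
      show "card (S1 \<union> S2) = ?g k" using card_Un_children[OF dl S1(1) S2(1)] S1(2) S2(2) kk(4) by simp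
    qed
  qed
  moreover have "even_gap (a1 + a2) (b1 + b2)" using l(1) r(1) unfolding even_gap_def by auto
  ultimately show ?thesis unfolding profile_def using l(2) r(2) n by auto
qed

lemma gamma_profile_TrueTwin:
  assumes "distinct_leaves (Node TrueTwin l r)" "gamma_profile l m1 a1 b1" "gamma_profile r m2 a2 b2"
  shows "gamma_profile (Node TrueTwin l r) (m1 + m2) (twin_alpha a1 b1 a2 b2) (b1 + b2)"
proof -
  let ?v = "Node TrueTwin l r" and ?g = "\<lambda>k. m1 + m2 + excess (twin_alpha a1 b1 a2 b2) (b1 + b2) k"
  have n: "card (tts ?v) = card (tts l) + card (tts r)" using card_tts_node[OF assms(1)] by simp
  note l = gamma_profileD[OF assms(2)] and r = gamma_profileD[OF assms(3)]
  have dl: "leaves l \<inter> leaves r = {}" using assms(1) by simp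
  have lower: "?g k \<le> card S" if S: "k_feasible ?v k S" for k S
  proof -
    obtain x1 x2 j where kk: "k = x1 + x2" "k_feasible l (x1 + j) (S \<inter> leaves l)"
      "k_feasible r (x2 + j) (S \<inter> leaves r)"
      using k_feasible_TrueTwin_split[OF assms(1) S] .
    have "m1 + excess a1 b1 (x1 + j) \<le> card (S \<inter> leaves l)"
      "m2 + excess a2 b2 (x2 + j) \<le> card (S \<inter> leaves r)"
      using gamma_profile_lower[OF assms(2) kk(2)] gamma_profile_lower[OF assms(3) kk(3)] .
    then show ?thesis using excess_twin_le[OF l(1) r(1), of x1 x2 j]
      card_k_feasible_split[OF assms(1) S] unfolding kk(1) by linarith
  qed
  have "gamma_hat ?v k = enat (?g k)" if k: "k \<le> card (tts ?v)" for k
  proof -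
    obtain x1 x2 j where kk: "x1 + j \<le> card (tts l)" "x2 + j \<le> card (tts r)" "k = x1 + x2"
      "excess a1 b1 (x1 + j) + excess a2 b2 (x2 + j) = excess (twin_alpha a1 b1 a2 b2) (b1 + b2) k"
      using excess_twin_split[OF l(1) r(1) l(2) r(2)] k unfolding n .
    obtain S1 where S1: "k_feasible l (x1 + j) S1" "card S1 = m1 + excess a1 b1 (x1 + j)"
      using gamma_profile_attained[OF assms(2) kk(1)] .
    obtain S2 where S2: "k_feasible r (x2 + j) S2" "card S2 = m2 + excess a2 b2 (x2 + j)"
      using gamma_profile_attained[OF assms(3) kk(2)] .
    show ?thesis
    proof (rule gamma_hat_eqI[OF _ _ lower])
      show "k_feasible ?v k (S1 \<union> S2)" using k_feasible_TrueTwin_union[OF assms(1) S1(1) S2(1)] kk(3) by simp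
      show "card (S1 \<union> S2) = ?g k" using card_Un_children[OF dl S1(1) S2(1)] S1(2) S2(2) kk(4) by simp
    qed
  qed
  then show ?thesis unfolding profile_def using even_gap_twin_alpha[OF l(1) r(1)] l(2) r(2) n by auto
qed

lemma gamma_Attach_lower:
  assumes "distinct_leaves (Node Attach l r)" "gamma_profile l m1 a1 b1" "gamma_profile r m2 a2 b2"
  shows "enat (m1 + m2 + (a2 - b1) + excess (attach_alpha a1 b1 a2 b2) (b1 - a2) k)
    \<le> gamma_hat (Node Attach l r) k"
proof (rule gamma_hat_ge)
  fix S assume S: "k_feasible (Node Attach l r) k S"
  obtain j where j: "k_feasible l (k + j) (S \<inter> leaves l)" "k_feasible r j (S \<inter> leaves r)"
    using k_feasible_Attach_split[OF assms(1) S] .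
  have "m1 + excess a1 b1 (k + j) \<le> card (S \<inter> leaves l)" "m2 + excess a2 b2 j \<le> card (S \<inter> leaves r)"
    using gamma_profile_lower[OF assms(2) j(1)] gamma_profile_lower[OF assms(3) j(2)] .
  then show "m1 + m2 + (a2 - b1) + excess (attach_alpha a1 b1 a2 b2) (b1 - a2) k \<le> card S"
    using excess_attach_le[OF gamma_profileD(1)[OF assms(2)] gamma_profileD(1)[OF assms(3)], of k j]
      card_k_feasible_split[OF assms(1) S] by linarith
qed

lemma gamma_Attach_upper:
  assumes "distinct_leaves (Node Attach l r)" "gamma_profile l m1 a1 b1" "gamma_profile r m2 a2 b2"
    and "k + j \<le> card (tts l)" "j \<le> card (tts r)" "1 \<le> k + j"
  shows "gamma_hat (Node Attach l r) k \<le> enat (m1 + m2 + excess a1 b1 (k + j) + excess a2 b2 j)"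
proof -
  obtain S1 where S1: "k_feasible l (k + j) S1" "card S1 = m1 + excess a1 b1 (k + j)"
    using gamma_profile_attained[OF assms(2,4)] .
  obtain S2 where S2: "k_feasible r j S2" "card S2 = m2 + excess a2 b2 j"
    using gamma_profile_attained[OF assms(3,5)] .
  have "card (S1 \<union> S2) = m1 + m2 + excess a1 b1 (k + j) + excess a2 b2 j"
    using card_Un_children[OF _ S1(1) S2(1)] assms(1) S1(2) S2(2) by simp
  then show ?thesis using gamma_hat_le[OF k_feasible_Attach_union[OF assms(1) S1(1) S2(1) assms(6)]]
    by simp
qed

text \<open>When \<open>a1 = a2 = 0\<close>, the optimal choice for \<open>k = 0\<close> would take no twins of \<open>l\<close> at all,
  and then nothing dominates the twins of \<open>r\<close>; only parity pins down \<open>\<gamma>\<^sub>0\<close> in this case.\<close>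
lemma gamma_Attach_zero:
  assumes "well_formed (Node Attach l r)" "gamma_profile l m1 0 b1" "gamma_profile r m2 0 b2"
  shows "gamma_hat (Node Attach l r) 0 = enat (m1 + m2) \<or> gamma_hat (Node Attach l r) 0 = enat (m1 + m2 + 2)"
proof -
  let ?v = "Node Attach l r"
  have wf: "well_formed l" "well_formed r" using well_formed_children[OF assms(1)] by auto
  have dl: "distinct_leaves ?v" using assms(1) unfolding well_formed_def by simp
  have b: "even b1" "even b2" using gamma_profileD(1)[OF assms(2)] gamma_profileD(1)[OF assms(3)]
    unfolding even_gap_def by auto
  have "1 \<le> card (tts l)" "1 \<le> card (tts r)" by (rule one_le_card_tts)+
  then have "gamma_hat ?v 0 \<le> enat (m1 + m2 + excess 0 b1 1 + excess 0 b2 1)"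
    using gamma_Attach_upper[OF dl assms(2,3), of 0 1] by simp
  also have "\<dots> = enat (m1 + m2 + 2)" using excess_zero_one[OF b(1)] excess_zero_one[OF b(2)] by simp
  finally have up: "gamma_hat ?v 0 \<le> enat (m1 + m2 + 2)" .
  then obtain H where H: "gamma_hat ?v 0 = enat H" by (cases "gamma_hat ?v 0") auto
  then obtain S where "k_feasible ?v 0 S" "card S = H" by (rule gamma_hat_attained)
  then have "even H" using k_feasible_parity[OF assms(1)] by fastforce
  moreover have "even (m1 + m2)"
    using gamma_profile_parity[OF wf(1) assms(2)] gamma_profile_parity[OF wf(2) assms(3)] by simp
  moreover have "m1 + m2 \<le> H" "H \<le> m1 + m2 + 2"
    using gamma_Attach_lower[OF dl assms(2,3), of 0] up H by (simp_all add: excess_def)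
  ultimately have "H = m1 + m2 \<or> H = m1 + m2 + 2" by presburger
  then show ?thesis using H by auto
qed

lemma gamma_Attach_regular:
  assumes "distinct_leaves (Node Attach l r)" "gamma_profile l m1 a1 b1" "gamma_profile r m2 a2 b2"
    and "k \<le> card (tts l)" "1 \<le> k \<or> 0 < a1 \<or> 0 < a2"
  shows "gamma_hat (Node Attach l r) k
    = enat (m1 + m2 + (a2 - b1) + excess (attach_alpha a1 b1 a2 b2) (b1 - a2) k)"
proof (rule antisym)
  let ?e = "(a2 - b1) + excess (attach_alpha a1 b1 a2 b2) (b1 - a2) k"
  note l = gamma_profileD[OF assms(2)] and r = gamma_profileD[OF assms(3)]
  obtain j where j: "j \<le> card (tts r)" "k + j \<le> card (tts l)" "1 \<le> k + j"
    "excess a1 b1 (k + j) + excess a2 b2 j = ?e"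
  proof (cases "1 \<le> k")
    case True
    obtain j where "j \<le> card (tts r)" "k + j \<le> card (tts l)" "excess a1 b1 (k + j) + excess a2 b2 j = ?e"
      using excess_attach_split[OF l(1) r(1) l(2) r(2) assms(4)] .
    then show thesis using that[of j] True by simp
  next
    case False
    then have "k = 0" "0 < a1 \<or> 0 < a2" using assms(5) by auto
    moreover have "1 \<le> card (tts l)" "1 \<le> card (tts r)" by (rule one_le_card_tts)+
    ultimately obtain j where "1 \<le> j" "j \<le> card (tts l)" "j \<le> card (tts r)"
      "excess a1 b1 j + excess a2 b2 j = (a2 - b1) + excess (attach_alpha a1 b1 a2 b2) (b1 - a2) 0"
      using excess_attach_split_zero[OF l(1) r(1) l(2) r(2)] by blast
    then show thesis using that[of j] \<open>k = 0\<close> by simp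
  qed
  have "gamma_hat (Node Attach l r) k \<le> enat (m1 + m2 + excess a1 b1 (k + j) + excess a2 b2 j)"
    using gamma_Attach_upper[OF assms(1-3) j(2,1,3)] .
  also have "\<dots> = enat (m1 + m2 + ?e)" using j(4) by simp
  finally show "gamma_hat (Node Attach l r) k
      \<le> enat (m1 + m2 + (a2 - b1) + excess (attach_alpha a1 b1 a2 b2) (b1 - a2) k)"
    by (simp add: add.assoc)
qed (rule gamma_Attach_lower[OF assms(1-3)])

lemma gamma_profile_Attach:
  assumes "well_formed (Node Attach l r)" "gamma_profile l m1 a1 b1" "gamma_profile r m2 a2 b2"
  shows "\<exists>m a b. gamma_profile (Node Attach l r) m a b"
proof -
  let ?v = "Node Attach l r"
  have dl: "distinct_leaves ?v" using assms(1) unfolding well_formed_def by simp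
  note l = gamma_profileD[OF assms(2)] and r = gamma_profileD[OF assms(3)]
  note regular = gamma_Attach_regular[OF dl assms(2,3)]
  show ?thesis
  proof (cases "0 < a1 \<or> 0 < a2")
    case True
    have "gamma_profile ?v (m1 + m2 + (a2 - b1)) (attach_alpha a1 b1 a2 b2) (b1 - a2)"
      unfolding profile_def using even_gap_attach_alpha[OF l(1) r(1)] l(2) regular True by auto
    then show ?thesis by blast
  next
    case False
    then have a: "a1 = 0" "a2 = 0" by auto
    have "attach_alpha a1 b1 a2 b2 = 0" unfolding a attach_alpha_def twin_alpha_def by simp
    then have "gamma_hat ?v k = enat (m1 + m2 + excess 0 b1 k)" if "1 \<le> k" "k \<le> card (tts ?v)" for k
      using regular[of k] that a by simp
    moreover have "gamma_hat ?v 0 = enat (m1 + m2) \<or> gamma_hat ?v 0 = enat (m1 + m2 + 2)"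
      using gamma_Attach_zero[OF assms(1)] assms(2,3) a by simp
    moreover have "even b1" using l(1) a(1) unfolding even_gap_def by simp
    moreover have "1 \<le> card (tts ?v)" by (rule one_le_card_tts)
    ultimately show ?thesis using profile_change_at_zero l(2) by simp
  qed
qed

lemma exists_gamma_profile: "well_formed v \<Longrightarrow> \<exists>m a b. gamma_profile v m a b"
proof (induction v)
  case (Leaf x)
  show ?case using gamma_profile_Leaf[of x] by blast
next
  case (Node c l r)
  obtain m1 a1 b1 where l: "gamma_profile l m1 a1 b1"
    using Node.IH(1) well_formed_children(1)[OF Node.prems] by blast
  obtain m2 a2 b2 where r: "gamma_profile r m2 a2 b2"
    using Node.IH(2) well_formed_children(2)[OF Node.prems] by blast
  have dl: "distinct_leaves (Node c l r)" using Node.prems unfolding well_formed_def by simp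
  show ?case
  proof (cases c)
    case TrueTwin
    then show ?thesis using gamma_profile_TrueTwin[OF _ l r] dl by blast
  next
    case FalseTwin
    then show ?thesis using gamma_profile_FalseTwin[OF _ l r] dl by blast
  next
    case Attach
    then show ?thesis using gamma_profile_Attach[OF _ l r] Node.prems by blast
  qed
qed

theorem lemma3:
  fixes T :: "'a dtree" and V :: "'a set" and E :: "'a set set"
  assumes "distance_hereditary V E"
    and "decomposition_tree T V E"
    and "v \<in> subtrees T" and "is_internal v"
    and "k \<le> card (tts v)"
  shows "gamma_hat v k =
    (if k \<le> alpha_hat v then min_hat v + enat (alpha_hat v - k)
     else if beta_hat v \<le> k then min_hat v + enat (k - beta_hat v)
     else if even (k - alpha_hat v) then min_hat v
     else min_hat v + 1)"
proof -
  have T: "distinct_leaves T" "tedges T = E" using assms(2) unfolding decomposition_tree_def by auto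
  have "\<forall>e\<in>E. card e = 2"
    using assms(1) unfolding distance_hereditary_def simple_graph_def by auto
  then have "well_formed v"
    using subtree_distinct_leaves_tedges[OF assms(3) T(1)] T(2) unfolding well_formed_def by auto
  then obtain m a b where P: "gamma_profile v m a b" using exists_gamma_profile by blast
  have "min_hat v = enat m" "alpha_hat v = a" "beta_hat v = b"
    using profile_Min_Least_Greatest[OF P] unfolding min_hat_def alpha_hat_def beta_hat_def by simp_all
  then show ?thesis
    using gamma_profileD(3)[OF P assms(5)] by (simp add: excess_def one_enat_def)
qed

end
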